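(* Let $X$ and $Y$ be compact Hausdorff spaces, and let $E\subseteq C(X)$ and $F\subseteq C(Y)$ be Riesz subspaces, dense for the supremum norm, containing the respective constant functions. Let $G_1,G_2$ be Archimedean Riesz spaces and $\phi_i:E\times F\to G_i$ ($i=1,2$) be bi-injective Riesz bimorphisms. For $i=1,2$ let $E\overline{\otimes}_{\phi_i}F$ denote the Riesz subspace of $G_i$ generated by $\phi_i(E\times F)$. Then there is a unique Riesz isomorphism $T:E\overline{\otimes}_{\phi_1}F\to E\overline{\otimes}_{\phi_2}F$ such that $T\circ\phi_1=\phi_2$.
   Context: A linear map $T$ between Riesz spaces is a Riesz homomorphism if $T(x\vee y)=Tx\vee Ty$; a Riesz isomorphism is a bijective Riesz homomorphism. A bilinear map $\phi:E\times F\to G$ is a Riesz bimorphism if $\phi(\cdot,y)$ is a Riesz homomorphism for every $y\in F_+$ and $\phi(x,\cdot)$ is a Riesz homomorphism for every $x\in E_+$. $\phi$ is bi-injective if $\phi(x,y)=0$ implies $x=0$ or $y=0$. *)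

theory Defs
  imports "HOL-Analysis.Analysis"
begin

definition Cfun :: "'a topology \<Rightarrow> ('a \<Rightarrow> real) set" where
  "Cfun X = {f. continuous_map X euclideanreal f \<and> (\<forall>x. x \<notin> topspace X \<longrightarrow> f x = 0)}"

definition const_on :: "'a topology \<Rightarrow> real \<Rightarrow> ('a \<Rightarrow> real)" where
  "const_on X c = (\<lambda>x. if x \<in> topspace X then c else 0)"

definition riesz_subspace_C :: "'a topology \<Rightarrow> ('a \<Rightarrow> real) set \<Rightarrow> bool" where
  "riesz_subspace_C X E \<longleftrightarrow> E \<subseteq> Cfun X \<and> (\<lambda>x. 0) \<in> E \<and>
     (\<forall>f\<in>E. \<forall>g\<in>E. (\<lambda>x. f x + g x) \<in> E) \<and>
     (\<forall>c. \<forall>f\<in>E. (\<lambda>x. c * f x) \<in> E) \<and>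
     (\<forall>f\<in>E. \<forall>g\<in>E. (\<lambda>x. max (f x) (g x)) \<in> E)"

definition sup_dense_C :: "'a topology \<Rightarrow> ('a \<Rightarrow> real) set \<Rightarrow> bool" where
  "sup_dense_C X E \<longleftrightarrow> (\<forall>f\<in>Cfun X. \<forall>\<epsilon>>0. \<exists>g\<in>E. \<forall>x\<in>topspace X. \<bar>f x - g x\<bar> < \<epsilon>)"

definition archimedean_riesz :: "'g::{ordered_real_vector,lattice} itself \<Rightarrow> bool" where
  "archimedean_riesz _ \<longleftrightarrow>
     (\<forall>x y::'g. 0 \<le> x \<and> (\<forall>n::nat. real n *\<^sub>R x \<le> y) \<longrightarrow> x = 0)"

definition riesz_subspace :: "'g::{ordered_real_vector,lattice} set \<Rightarrow> bool" where
  "riesz_subspace S \<longleftrightarrow> 0 \<in> S \<and> (\<forall>x\<in>S. \<forall>y\<in>S. x + y \<in> S) \<and>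
     (\<forall>c. \<forall>x\<in>S. c *\<^sub>R x \<in> S) \<and> (\<forall>x\<in>S. \<forall>y\<in>S. sup x y \<in> S)"

definition riesz_span :: "'g::{ordered_real_vector,lattice} set \<Rightarrow> 'g set" where
  "riesz_span A = \<Inter>{S. riesz_subspace S \<and> A \<subseteq> S}"

definition riesz_hom_on :: "'g::{ordered_real_vector,lattice} set \<Rightarrow> ('g \<Rightarrow> 'h::{ordered_real_vector,lattice}) \<Rightarrow> bool" where
  "riesz_hom_on S T \<longleftrightarrow> (\<forall>x\<in>S. \<forall>y\<in>S. T (x + y) = T x + T y) \<and>
     (\<forall>c. \<forall>x\<in>S. T (c *\<^sub>R x) = c *\<^sub>R T x) \<and>
     (\<forall>x\<in>S. \<forall>y\<in>S. T (sup x y) = sup (T x) (T y))"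

definition riesz_iso_on :: "'g::{ordered_real_vector,lattice} set \<Rightarrow> 'h::{ordered_real_vector,lattice} set \<Rightarrow> ('g \<Rightarrow> 'h) \<Rightarrow> bool" where
  "riesz_iso_on S S' T \<longleftrightarrow> riesz_hom_on S T \<and> bij_betw T S S'"

definition riesz_bimorphism ::
  "('a \<Rightarrow> real) set \<Rightarrow> ('b \<Rightarrow> real) set \<Rightarrow> (('a \<Rightarrow> real) \<Rightarrow> ('b \<Rightarrow> real) \<Rightarrow> 'g::{ordered_real_vector,lattice}) \<Rightarrow> bool" where
  "riesz_bimorphism E F \<phi> \<longleftrightarrow>
     (\<forall>y\<in>F. (\<forall>f\<in>E. \<forall>g\<in>E. \<phi> (\<lambda>t. f t + g t) y = \<phi> f y + \<phi> g y) \<and>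
             (\<forall>c. \<forall>f\<in>E. \<phi> (\<lambda>t. c * f t) y = c *\<^sub>R \<phi> f y)) \<and>
     (\<forall>x\<in>E. (\<forall>f\<in>F. \<forall>g\<in>F. \<phi> x (\<lambda>t. f t + g t) = \<phi> x f + \<phi> x g) \<and>
             (\<forall>c. \<forall>f\<in>F. \<phi> x (\<lambda>t. c * f t) = c *\<^sub>R \<phi> x f)) \<and>
     (\<forall>y\<in>F. (\<forall>t. 0 \<le> y t) \<longrightarrow>
        (\<forall>f\<in>E. \<forall>g\<in>E. \<phi> (\<lambda>t. max (f t) (g t)) y = sup (\<phi> f y) (\<phi> g y))) \<and>
     (\<forall>x\<in>E. (\<forall>t. 0 \<le> x t) \<longrightarrow>
        (\<forall>f\<in>F. \<forall>g\<in>F. \<phi> x (\<lambda>t. max (f t) (g t)) = sup (\<phi> x f) (\<phi> x g)))"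

definition bi_injective ::
  "('a \<Rightarrow> real) set \<Rightarrow> ('b \<Rightarrow> real) set \<Rightarrow> (('a \<Rightarrow> real) \<Rightarrow> ('b \<Rightarrow> real) \<Rightarrow> 'g::{ordered_real_vector,lattice}) \<Rightarrow> bool" where
  "bi_injective E F \<phi> \<longleftrightarrow>
     (\<forall>x\<in>E. \<forall>y\<in>F. \<phi> x y = 0 \<longrightarrow> x = (\<lambda>t. 0) \<or> y = (\<lambda>t. 0))"

end

(*
  Riesz terms over the generators E x F (built with +, scalar multiplication and sup) describe
  the Riesz subspace generated by phi (E x F). For a bi-injective Riesz bimorphism phi into an
  Archimedean Riesz space, the value t(phi) of a term is >= 0 iff the real function
  (s, u) |-> t(x s * y u) is >= 0 everywhere. Hence t(phi1) = 0 iff t(phi2) = 0, which makes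
  t(phi1) |-> t(phi2) a well-defined Riesz isomorphism; it is unique because Riesz homomorphisms
  that agree on generators agree on the generated Riesz subspace.

  If t(x s * y u) >= 0 everywhere, replace every second argument y by a step function
  sum_J y(p J) * h J with pairwise disjoint h J in F. On disjointly supported functions phi
  turns sups of sums into sums of sups, so the modified term is a sum of values phi g (h J)
  with g >= 0 pointwise, hence >= 0. Replacing the generators changes t(phi) by at most a
  Lipschitz constant of t times phi M e, where e is the pointwise error of the step functions.
  For N grids shifted against each other these errors add up to a function bounded
  independently of N, since a point lies near the grid for at most as many shifts as there are
  generators. Thus N t(phi) >= - C phi 1 1 for all N, and the Archimedean property gives
  t(phi) >= 0. Conversely, if t(x s0 * y u0) < 0, bumps p at s0 and q at u0 make the term
  K * (-t)^+ - p * q pointwise nonnegative, so 0 <= phi p q <= K * (-t(phi))^+ = 0,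
  contradicting bi-injectivity.
*)
theory Submission
  imports Defs "HOL-Library.Lattice_Algebras"
begin

section \<open>Lattice-ordered vector spaces\<close>

interpretation riesz: lattice_ab_group_add "(+)" "0 :: 'g::{ordered_real_vector,lattice}" "(-)" uminus
    "(\<le>)" "(<)" inf sup
  by unfold_locales

definition riesz_abs :: "'g::{ordered_real_vector,lattice} \<Rightarrow> 'g" where
  "riesz_abs v = sup v (- v)"

lemma riesz_abs_ge: "v \<le> riesz_abs v" "- v \<le> riesz_abs v"
  by (simp_all add: riesz_abs_def)

lemma riesz_abs_le_iff: "riesz_abs v \<le> d \<longleftrightarrow> v \<le> d \<and> - v \<le> d"
  by (simp add: riesz_abs_def)

lemma riesz_abs_real [simp]: "riesz_abs (v::real) = \<bar>v\<bar>"
  by (simp add: riesz_abs_def sup_max abs_if)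

lemma riesz_abs_nonneg: "0 \<le> riesz_abs v"
proof -
  have "v + - v \<le> riesz_abs v + riesz_abs v"
    by (intro add_mono riesz_abs_ge)
  then show ?thesis
    by (simp add: riesz.zero_le_double_add_iff_zero_le_single_add)
qed

lemma riesz_abs_minus_commute: "riesz_abs (a - b) = riesz_abs (b - a)"
  by (simp add: riesz_abs_def sup_commute)

lemma riesz_abs_triangle: "riesz_abs (a + b) \<le> riesz_abs a + riesz_abs b"
proof -
  have "a + b \<le> riesz_abs a + riesz_abs b" "- a + - b \<le> riesz_abs a + riesz_abs b"
    by (intro add_mono riesz_abs_ge)+
  then show ?thesis
    by (simp add: riesz_abs_le_iff add.commute)
qed

lemma riesz_abs_scaleR_le: "riesz_abs (c *\<^sub>R v) \<le> \<bar>c\<bar> *\<^sub>R riesz_abs v"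
proof -
  have "\<bar>c\<bar> *\<^sub>R v \<le> \<bar>c\<bar> *\<^sub>R riesz_abs v" "- (\<bar>c\<bar> *\<^sub>R v) \<le> \<bar>c\<bar> *\<^sub>R riesz_abs v"
    using scaleR_left_mono[OF riesz_abs_ge(1), of "\<bar>c\<bar>"]
      scaleR_left_mono[OF riesz_abs_ge(2), of "\<bar>c\<bar>"] by simp_all
  then show ?thesis
    by (cases "0 \<le> c") (auto simp: riesz_abs_le_iff)
qed

lemma sup_diff_le_riesz_abs:
  assumes "riesz_abs (a - a') \<le> d" "riesz_abs (b - b') \<le> d"
  shows "sup a b - sup a' b' \<le> d"
proof -
  have "a \<le> a' + d" "b \<le> b' + d"
    using assms by (auto simp: riesz_abs_le_iff algebra_simps)
  then have "sup a b \<le> sup a' b' + d"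
    by (meson add_right_mono order_trans sup.cobounded1 sup.cobounded2 sup_least)
  then show ?thesis
    by (simp only: diff_le_eq add.commute)
qed

lemma riesz_abs_sup_diff_le:
  "riesz_abs (sup a b - sup a' b') \<le> riesz_abs (a - a') + riesz_abs (b - b')"
proof -
  let ?d = "riesz_abs (a - a') + riesz_abs (b - b')"
  have "riesz_abs (a - a') \<le> ?d" "riesz_abs (b - b') \<le> ?d"
    by (simp_all add: riesz_abs_nonneg add_increasing add_increasing2)
  then have "sup a b - sup a' b' \<le> ?d" "sup a' b' - sup a b \<le> ?d"
    by (intro sup_diff_le_riesz_abs; simp add: riesz_abs_minus_commute)+
  then show ?thesis
    unfolding riesz_abs_le_iff minus_diff_eq by blast
qed

lemma inf_add_le_add_inf:
  fixes a b c :: "'g::{ordered_real_vector,lattice}"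
  assumes "0 \<le> a" "0 \<le> b" "0 \<le> c"
  shows "inf (a + b) c \<le> inf a c + inf b c"
proof -
  have "inf a c + inf b c = inf (inf (a + b) (a + c)) (inf (c + b) (c + c))"
    by (simp add: riesz.add_inf_distrib_left riesz.add_inf_distrib_right inf_aci)
  moreover have "inf (a + b) c \<le> inf (inf (a + b) (a + c)) (inf (c + b) (c + c))"
    using assms by (auto intro: inf.coboundedI2 add_increasing add_increasing2)
  ultimately show ?thesis
    by simp
qed

lemma inf_sum_le_sum_inf:
  fixes a :: "'i \<Rightarrow> 'g::{ordered_real_vector,lattice}"
  assumes "\<And>i. i \<in> I \<Longrightarrow> 0 \<le> a i" "0 \<le> c"
  shows "inf (\<Sum>i\<in>I. a i) c \<le> (\<Sum>i\<in>I. inf (a i) c)"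
  using assms(1)
proof (induction I rule: infinite_finite_induct)
  case (insert j I)
  have "inf (\<Sum>i\<in>insert j I. a i) c \<le> inf (a j) c + inf (\<Sum>i\<in>I. a i) c"
    using insert assms(2) by (simp add: inf_add_le_add_inf sum_nonneg)
  also have "\<dots> \<le> inf (a j) c + (\<Sum>i\<in>I. inf (a i) c)"
    using insert by (simp add: add_left_mono)
  finally show ?case
    using insert by simp
qed (simp_all add: assms(2))

lemma inf_sum_sum_eq_0:
  fixes a :: "'i \<Rightarrow> 'g::{ordered_real_vector,lattice}" and b :: "'j \<Rightarrow> 'g"
  assumes "\<And>i. i \<in> I \<Longrightarrow> 0 \<le> a i" "\<And>j. j \<in> J \<Longrightarrow> 0 \<le> b j"
    and "\<And>i j. i \<in> I \<Longrightarrow> j \<in> J \<Longrightarrow> inf (a i) (b j) = 0"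
  shows "inf (\<Sum>i\<in>I. a i) (\<Sum>j\<in>J. b j) = 0"
proof (rule antisym)
  have "inf (\<Sum>i\<in>I. a i) (\<Sum>j\<in>J. b j) \<le> (\<Sum>i\<in>I. inf (a i) (\<Sum>j\<in>J. b j))"
    using assms(1,2) by (intro inf_sum_le_sum_inf) (auto intro: sum_nonneg)
  also have "\<dots> \<le> (\<Sum>i\<in>I. \<Sum>j\<in>J. inf (b j) (a i))"
  proof (rule sum_mono)
    fix i assume "i \<in> I"
    then show "inf (a i) (\<Sum>j\<in>J. b j) \<le> (\<Sum>j\<in>J. inf (b j) (a i))"
      unfolding inf_commute[of "a i"] using assms(1,2) by (intro inf_sum_le_sum_inf) auto
  qed
  also have "\<dots> = 0"
    using assms(3) by (simp add: inf_commute)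
  finally show "inf (\<Sum>i\<in>I. a i) (\<Sum>j\<in>J. b j) \<le> 0" .
  show "0 \<le> inf (\<Sum>i\<in>I. a i) (\<Sum>j\<in>J. b j)"
    using assms(1,2) by (simp add: sum_nonneg)
qed

lemma sup_diff_0_eq_if_inf_eq_0:
  fixes P N :: "'g::{ordered_real_vector,lattice}"
  assumes "inf P N = 0"
  shows "sup (P - N) 0 = P"
  using riesz.add_sup_distrib_right[of P N "- N"] riesz.add_eq_inf_sup[of P N] assms
  by (simp add: algebra_simps)

lemma archimedean_nonneg_if_bounded_below:
  fixes u v :: "'g::{ordered_real_vector,lattice}"
  assumes "archimedean_riesz TYPE('g)" "0 \<le> u" "0 \<le> C"
    and "\<And>N. 0 < N \<Longrightarrow> - (C *\<^sub>R u) \<le> real N *\<^sub>R v"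
  shows "0 \<le> v"
proof -
  define neg where "neg = sup (- v) 0"
  have "real k *\<^sub>R neg \<le> u" for k :: nat
  proof (cases "k = 0")
    case False
    define N where "N = nat \<lceil>real k * C\<rceil> + 1"
    have "0 < N" "real k * C < real N"
      unfolding N_def by linarith+
    have "(1 / real N) *\<^sub>R (- (C *\<^sub>R u)) \<le> (1 / real N) *\<^sub>R (real N *\<^sub>R v)"
      using assms(4)[OF \<open>0 < N\<close>] by (intro scaleR_left_mono) auto
    then have "- v \<le> (C / real N) *\<^sub>R u"
      using \<open>0 < N\<close> by (simp add: minus_le_iff)
    also have "\<dots> \<le> (1 / real k) *\<^sub>R u"
      using \<open>real k * C < real N\<close> False \<open>0 < N\<close> assms(2,3)
      by (intro scaleR_right_mono) (simp_all add: field_simps)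
    finally have "neg \<le> (1 / real k) *\<^sub>R u"
      unfolding neg_def using assms(2) by (simp add: scaleR_nonneg_nonneg)
    then have "real k *\<^sub>R neg \<le> real k *\<^sub>R ((1 / real k) *\<^sub>R u)"
      by (intro scaleR_left_mono) auto
    then show ?thesis
      using False by simp
  qed (simp add: assms(2))
  moreover have "0 \<le> neg"
    unfolding neg_def by simp
  ultimately have "neg = 0"
    using assms(1) unfolding archimedean_riesz_def by blast
  then show ?thesis
    unfolding neg_def by (metis neg_le_0_iff_le sup.cobounded1)
qed

section \<open>Riesz terms and generated Riesz subspaces\<close>

text \<open>The Riesz subspace generated by \<open>\<phi> ` (E \<times> F)\<close> consists of the values of these terms
  (\<open>riesz_span_eq_term_evals\<close>), so maps between two such subspaces are defined and compared
  term by term.\<close>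
datatype ('x, 'y) riesz_term =
  Gen 'x 'y | Add "('x, 'y) riesz_term" "('x, 'y) riesz_term" | Scale real "('x, 'y) riesz_term"
  | Join "('x, 'y) riesz_term" "('x, 'y) riesz_term"

primrec term_eval :: "('x \<Rightarrow> 'y \<Rightarrow> 'g::{ordered_real_vector,lattice}) \<Rightarrow> ('x, 'y) riesz_term \<Rightarrow> 'g"
  where
    "term_eval f (Gen x y) = f x y"
  | "term_eval f (Add p q) = term_eval f p + term_eval f q"
  | "term_eval f (Scale c p) = c *\<^sub>R term_eval f p"
  | "term_eval f (Join p q) = sup (term_eval f p) (term_eval f q)"

primrec term_gens :: "('x, 'y) riesz_term \<Rightarrow> ('x \<times> 'y) set" where
  "term_gens (Gen x y) = {(x, y)}"
| "term_gens (Add p q) = term_gens p \<union> term_gens q"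
| "term_gens (Scale c p) = term_gens p"
| "term_gens (Join p q) = term_gens p \<union> term_gens q"

primrec term_lipschitz :: "('x, 'y) riesz_term \<Rightarrow> real" where
  "term_lipschitz (Gen x y) = 1"
| "term_lipschitz (Add p q) = term_lipschitz p + term_lipschitz q"
| "term_lipschitz (Scale c p) = \<bar>c\<bar> * term_lipschitz p"
| "term_lipschitz (Join p q) = term_lipschitz p + term_lipschitz q"

lemma term_lipschitz_nonneg: "0 \<le> term_lipschitz t"
  by (induction t) auto

lemma finite_term_gens: "finite (term_gens t)"
  by (induction t) auto

lemma term_eval_cong: "(\<And>x y. (x, y) \<in> term_gens t \<Longrightarrow> f x y = f' x y) \<Longrightarrow> term_eval f t = term_eval f' t"
  by (induction t) auto

lemma term_eval_eq_0: "(\<And>x y. (x, y) \<in> term_gens t \<Longrightarrow> f x y = 0) \<Longrightarrow> term_eval f t = 0"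
  by (induction t) auto

lemma term_eval_lipschitz:
  fixes f f' :: "'x \<Rightarrow> 'y \<Rightarrow> 'g::{ordered_real_vector,lattice}"
  assumes "\<And>x y. (x, y) \<in> term_gens t \<Longrightarrow> riesz_abs (f x y - f' x y) \<le> D"
  shows "riesz_abs (term_eval f t - term_eval f' t) \<le> term_lipschitz t *\<^sub>R D"
  using assms
proof (induction t)
  case (Add p q)
  have "term_eval f (Add p q) - term_eval f' (Add p q)
      = (term_eval f p - term_eval f' p) + (term_eval f q - term_eval f' q)"
    by (simp add: algebra_simps)
  then have "riesz_abs (term_eval f (Add p q) - term_eval f' (Add p q))
      \<le> riesz_abs (term_eval f p - term_eval f' p) + riesz_abs (term_eval f q - term_eval f' q)"
    by (simp only: riesz_abs_triangle)
  also have "\<dots> \<le> term_lipschitz p *\<^sub>R D + term_lipschitz q *\<^sub>R D"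
    using Add by (intro add_mono) auto
  finally show ?case
    by (simp add: scaleR_add_left)
next
  case (Scale c p)
  have "riesz_abs (term_eval f (Scale c p) - term_eval f' (Scale c p))
      \<le> \<bar>c\<bar> *\<^sub>R riesz_abs (term_eval f p - term_eval f' p)"
    using riesz_abs_scaleR_le[of c "term_eval f p - term_eval f' p"] by (simp add: scaleR_diff_right)
  also have "\<dots> \<le> \<bar>c\<bar> *\<^sub>R (term_lipschitz p *\<^sub>R D)"
    using Scale by (intro scaleR_left_mono) auto
  finally show ?case
    by simp
next
  case (Join p q)
  have "riesz_abs (term_eval f (Join p q) - term_eval f' (Join p q))
      \<le> riesz_abs (term_eval f p - term_eval f' p) + riesz_abs (term_eval f q - term_eval f' q)"
    unfolding term_eval.simps by (rule riesz_abs_sup_diff_le)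
  also have "\<dots> \<le> term_lipschitz p *\<^sub>R D + term_lipschitz q *\<^sub>R D"
    using Join by (intro add_mono) auto
  finally show ?case
    by (simp add: scaleR_add_left)
qed simp

lemma term_eval_in_riesz_subspace:
  assumes "riesz_subspace S" "\<And>x y. (x, y) \<in> term_gens t \<Longrightarrow> f x y \<in> S"
  shows "term_eval f t \<in> S"
  using assms by (induction t) (auto simp: riesz_subspace_def)

lemma riesz_subspace_riesz_span: "riesz_subspace (riesz_span A)"
  unfolding riesz_span_def riesz_subspace_def by auto

lemma riesz_span_superset: "A \<subseteq> riesz_span A"
  unfolding riesz_span_def by auto

lemma riesz_span_minimal: "riesz_subspace S \<Longrightarrow> A \<subseteq> S \<Longrightarrow> riesz_span A \<subseteq> S"
  unfolding riesz_span_def by auto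

lemma riesz_span_eq_term_evals:
  fixes f :: "'x \<Rightarrow> 'y \<Rightarrow> 'g::{ordered_real_vector,lattice}"
  assumes "x0 \<in> A" "y0 \<in> B"
  shows "riesz_span ((\<lambda>(x, y). f x y) ` (A \<times> B)) = {term_eval f t | t. term_gens t \<subseteq> A \<times> B}"
    (is "_ = ?V")
proof
  have "riesz_subspace ?V"
    unfolding riesz_subspace_def
  proof (intro conjI ballI allI)
    show "0 \<in> ?V"
      using assms by (auto intro!: exI[of _ "Scale 0 (Gen x0 y0)"])
    fix u v assume "u \<in> ?V" "v \<in> ?V"
    then obtain p q where pq: "u = term_eval f p" "v = term_eval f q"
      "term_gens p \<subseteq> A \<times> B" "term_gens q \<subseteq> A \<times> B"
      by blast
    show "u + v \<in> ?V"
      using pq by (auto intro!: exI[of _ "Add p q"])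
    show "sup u v \<in> ?V"
      using pq by (auto intro!: exI[of _ "Join p q"])
  next
    fix c u assume "u \<in> ?V"
    then obtain p where "u = term_eval f p" "term_gens p \<subseteq> A \<times> B"
      by blast
    then show "c *\<^sub>R u \<in> ?V"
      by (auto intro!: exI[of _ "Scale c p"])
  qed
  moreover have "(\<lambda>(x, y). f x y) ` (A \<times> B) \<subseteq> ?V"
    by (auto intro!: exI[of _ "Gen _ _"])
  ultimately show "riesz_span ((\<lambda>(x, y). f x y) ` (A \<times> B)) \<subseteq> ?V"
    by (rule riesz_span_minimal)
  show "?V \<subseteq> riesz_span ((\<lambda>(x, y). f x y) ` (A \<times> B))"
    using riesz_span_superset[of "(\<lambda>(x, y). f x y) ` (A \<times> B)"]
    by (auto intro!: term_eval_in_riesz_subspace riesz_subspace_riesz_span)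
qed

lemma riesz_hom_on_span_eqI:
  assumes "riesz_hom_on (riesz_span G) T" "riesz_hom_on (riesz_span G) T'"
    and "\<And>g. g \<in> G \<Longrightarrow> T g = T' g" "z \<in> riesz_span G"
  shows "T z = T' z"
proof -
  have "riesz_subspace {z \<in> riesz_span G. T z = T' z}"
    unfolding riesz_subspace_def
  proof (intro conjI ballI allI)
    have "0 \<in> riesz_span G"
      using riesz_subspace_riesz_span[of G] unfolding riesz_subspace_def by blast
    moreover have "T 0 = 0" "T' 0 = 0"
      using assms(1,2) \<open>0 \<in> riesz_span G\<close> unfolding riesz_hom_on_def by (metis scaleR_zero_left)+
    ultimately show "0 \<in> {z \<in> riesz_span G. T z = T' z}"
      by simp
  qed (use assms(1,2) riesz_subspace_riesz_span[of G] in \<open>auto simp: riesz_hom_on_def riesz_subspace_def\<close>)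
  moreover have "G \<subseteq> {z \<in> riesz_span G. T z = T' z}"
    using assms(3) riesz_span_superset by blast
  ultimately show ?thesis
    using riesz_span_minimal assms(4) by blast
qed

lemma riesz_hom_on_span_unique:
  assumes "riesz_hom_on (riesz_span ((\<lambda>(x, y). f x y) ` (A \<times> B))) T"
    and "riesz_hom_on (riesz_span ((\<lambda>(x, y). f x y) ` (A \<times> B))) T'"
    and "\<forall>x\<in>A. \<forall>y\<in>B. T (f x y) = g x y" "\<forall>x\<in>A. \<forall>y\<in>B. T' (f x y) = g x y"
  shows "\<forall>z\<in>riesz_span ((\<lambda>(x, y). f x y) ` (A \<times> B)). T z = T' z"
proof
  fix z assume "z \<in> riesz_span ((\<lambda>(x, y). f x y) ` (A \<times> B))"
  then show "T z = T' z"
  proof (rule riesz_hom_on_span_eqI[rotated 3])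
    show "riesz_hom_on (riesz_span ((\<lambda>(x, y). f x y) ` (A \<times> B))) T"
      "riesz_hom_on (riesz_span ((\<lambda>(x, y). f x y) ` (A \<times> B))) T'"
      by (fact assms(1), fact assms(2))
    show "T h = T' h" if "h \<in> (\<lambda>(x, y). f x y) ` (A \<times> B)" for h
      using that assms(3,4) by auto
  qed
qed

lemma riesz_hom_on_span_if_term_eval:
  fixes f1 :: "'x \<Rightarrow> 'y \<Rightarrow> 'g1::{ordered_real_vector,lattice}"
    and f2 :: "'x \<Rightarrow> 'y \<Rightarrow> 'g2::{ordered_real_vector,lattice}"
  assumes "x0 \<in> A" "y0 \<in> B"
    and "\<And>t. term_gens t \<subseteq> A \<times> B \<Longrightarrow> T (term_eval f1 t) = term_eval f2 t"
  shows "riesz_hom_on (riesz_span ((\<lambda>(x, y). f1 x y) ` (A \<times> B))) T"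
    and "T ` riesz_span ((\<lambda>(x, y). f1 x y) ` (A \<times> B)) = riesz_span ((\<lambda>(x, y). f2 x y) ` (A \<times> B))"
proof -
  note spans = riesz_span_eq_term_evals[OF assms(1,2)]
  show "riesz_hom_on (riesz_span ((\<lambda>(x, y). f1 x y) ` (A \<times> B))) T"
    unfolding riesz_hom_on_def spans
  proof (intro conjI ballI allI)
    fix a b assume "a \<in> {term_eval f1 t |t. term_gens t \<subseteq> A \<times> B}" "b \<in> {term_eval f1 t |t. term_gens t \<subseteq> A \<times> B}"
    then obtain p q where "a = term_eval f1 p" "b = term_eval f1 q" "term_gens p \<subseteq> A \<times> B" "term_gens q \<subseteq> A \<times> B"
      by blast
    then show "T (a + b) = T a + T b" "T (sup a b) = sup (T a) (T b)"
      using assms(3)[of "Add p q"] assms(3)[of "Join p q"] assms(3)[of p] assms(3)[of q] by simp_all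
  next
    fix c a assume "a \<in> {term_eval f1 t |t. term_gens t \<subseteq> A \<times> B}"
    then obtain p where "a = term_eval f1 p" "term_gens p \<subseteq> A \<times> B"
      by blast
    then show "T (c *\<^sub>R a) = c *\<^sub>R T a"
      using assms(3)[of "Scale c p"] assms(3)[of p] by simp
  qed
  show "T ` riesz_span ((\<lambda>(x, y). f1 x y) ` (A \<times> B)) = riesz_span ((\<lambda>(x, y). f2 x y) ` (A \<times> B))"
    unfolding spans
  proof
    show "T ` {term_eval f1 t |t. term_gens t \<subseteq> A \<times> B} \<subseteq> {term_eval f2 t |t. term_gens t \<subseteq> A \<times> B}"
      using assms(3) by auto
    show "{term_eval f2 t |t. term_gens t \<subseteq> A \<times> B} \<subseteq> T ` {term_eval f1 t |t. term_gens t \<subseteq> A \<times> B}"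
    proof
      fix b assume "b \<in> {term_eval f2 t |t. term_gens t \<subseteq> A \<times> B}"
      then obtain t where "b = term_eval f2 t" "term_gens t \<subseteq> A \<times> B"
        by blast
      then show "b \<in> T ` {term_eval f1 t |t. term_gens t \<subseteq> A \<times> B}"
        using assms(3) by (auto intro!: image_eqI[where x = "term_eval f1 t"])
    qed
  qed
qed

lemma riesz_iso_on_spans_if_same_kernel:
  fixes f1 :: "'x \<Rightarrow> 'y \<Rightarrow> 'g1::{ordered_real_vector,lattice}"
    and f2 :: "'x \<Rightarrow> 'y \<Rightarrow> 'g2::{ordered_real_vector,lattice}"
  assumes "x0 \<in> A" "y0 \<in> B"
    and "\<And>t. term_gens t \<subseteq> A \<times> B \<Longrightarrow> term_eval f1 t = 0 \<longleftrightarrow> term_eval f2 t = 0"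
  obtains T where "riesz_iso_on (riesz_span ((\<lambda>(x, y). f1 x y) ` (A \<times> B)))
      (riesz_span ((\<lambda>(x, y). f2 x y) ` (A \<times> B))) T"
    and "\<forall>x\<in>A. \<forall>y\<in>B. T (f1 x y) = f2 x y"
proof -
  have same_fibres: "term_eval f1 p = term_eval f1 q \<longleftrightarrow> term_eval f2 p = term_eval f2 q"
    if "term_gens p \<subseteq> A \<times> B" "term_gens q \<subseteq> A \<times> B" for p q
    using assms(3)[of "Add p (Scale (-1) q)"] that by simp
  define T where "T z = term_eval f2 (SOME t. term_gens t \<subseteq> A \<times> B \<and> term_eval f1 t = z)" for z
  have T: "T (term_eval f1 t) = term_eval f2 t" if "term_gens t \<subseteq> A \<times> B" for t
  proof -
    have "\<exists>t'. term_gens t' \<subseteq> A \<times> B \<and> term_eval f1 t' = term_eval f1 t"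
      using that by blast
    then show ?thesis
      unfolding T_def using same_fibres that by (metis (mono_tags, lifting) someI_ex)
  qed
  note hom = riesz_hom_on_span_if_term_eval[OF assms(1,2) T]
  have "inj_on T (riesz_span ((\<lambda>(x, y). f1 x y) ` (A \<times> B)))"
    unfolding riesz_span_eq_term_evals[OF assms(1,2)] using T same_fibres by (auto intro!: inj_onI)
  then show ?thesis
    using hom T[of "Gen _ _"] by (intro that) (auto simp: riesz_iso_on_def bij_betw_def)
qed

section \<open>Elementary real-valued estimates\<close>

lemma term_eval_products_close:
  assumes "\<And>x y. (x, y) \<in> term_gens t \<Longrightarrow>
      \<bar>x s - x s0\<bar> \<le> \<rho> \<and> \<bar>y u - y u0\<bar> \<le> \<rho> \<and> \<bar>x s0\<bar> \<le> M \<and> \<bar>y u\<bar> \<le> M"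
  shows "\<bar>term_eval (\<lambda>x y. x s * y u) t - term_eval (\<lambda>x y. x s0 * y u0) t\<bar> \<le> term_lipschitz t * (2 * M * \<rho>)"
proof -
  have "\<bar>x s * y u - x s0 * y u0\<bar> \<le> 2 * M * \<rho>" if "(x, y) \<in> term_gens t" for x y
  proof -
    have "\<bar>x s * y u - x s0 * y u0\<bar> \<le> \<bar>x s - x s0\<bar> * \<bar>y u\<bar> + \<bar>x s0\<bar> * \<bar>y u - y u0\<bar>"
      by (simp add: abs_mult[symmetric] algebra_simps abs_triangle_ineq[THEN order_trans])
    also have "\<dots> \<le> \<rho> * M + M * \<rho>"
      using assms[OF that] by (intro add_mono mult_mono) auto
    finally show ?thesis
      by simp
  qed
  then show ?thesis
    using term_eval_lipschitz[of t "\<lambda>x y. x s * y u" "\<lambda>x y. x s0 * y u0"] by simp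
qed

lemma bump_product_le_negative_part:
  fixes e :: "'a \<Rightarrow> 'b \<Rightarrow> real"
  assumes "0 < \<kappa>" "e s0 u0 = - \<kappa>"
    and "\<forall>s u. 0 < p s \<and> 0 < q u \<longrightarrow> \<bar>e s u - e s0 u0\<bar> \<le> \<kappa> / 2"
    and "\<forall>s. 0 \<le> p s \<and> p s \<le> \<rho>" "\<forall>u. 0 \<le> q u \<and> q u \<le> \<rho>"
  shows "p s * q u \<le> (2 * \<rho> * \<rho> / \<kappa>) * max (- e s u) 0"
proof (cases "0 < p s \<and> 0 < q u")
  case True
  then have "\<bar>e s u - e s0 u0\<bar> \<le> \<kappa> / 2"
    using assms(3) by blast
  then have "e s u - e s0 u0 \<le> \<kappa> / 2"
    unfolding abs_le_iff by blast
  then have "\<kappa> / 2 \<le> - e s u"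
    using assms(2) by linarith
  then have "\<kappa> / 2 \<le> max (- e s u) 0"
    by (simp add: le_max_iff_disj)
  have "0 \<le> \<rho>"
    using assms(4) by force
  have "\<rho> * \<rho> = (2 * \<rho> * \<rho> / \<kappa>) * (\<kappa> / 2)"
    using assms(1) by (simp add: field_simps)
  also have "\<dots> \<le> (2 * \<rho> * \<rho> / \<kappa>) * max (- e s u) 0"
    using \<open>\<kappa> / 2 \<le> max (- e s u) 0\<close> \<open>0 \<le> \<rho>\<close> assms(1) by (intro mult_left_mono) simp_all
  finally have "\<rho> * \<rho> \<le> (2 * \<rho> * \<rho> / \<kappa>) * max (- e s u) 0" .
  moreover have "p s * q u \<le> \<rho> * \<rho>"
    using assms(4,5) \<open>0 \<le> \<rho>\<close> by (intro mult_mono) auto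
  ultimately show ?thesis
    by linarith
next
  case False
  then have "p s * q u = 0"
    using assms(4,5) by (metis mult_eq_0_iff order.antisym not_le)
  moreover have "0 \<le> (2 * \<rho> * \<rho> / \<kappa>) * max (- e s u) 0"
    using assms(1) by (intro mult_nonneg_nonneg) simp_all
  ultimately show ?thesis
    by linarith
qed

lemma sum_disjoint_support_eq:
  fixes h :: "'j \<Rightarrow> real"
  assumes "finite I" "\<And>J. J \<in> I \<Longrightarrow> 0 \<le> h J"
    and "\<And>J K. J \<in> I \<Longrightarrow> K \<in> I \<Longrightarrow> J \<noteq> K \<Longrightarrow> min (h J) (h K) = 0"
    and "J0 \<in> I" "0 < h J0"
  shows "(\<Sum>J\<in>I. c J * h J) = c J0 * h J0"
proof -
  have "h J = 0" if "J \<in> I - {J0}" for J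
    using assms(2,4,5) assms(3)[of J0 J] that by (auto simp: min_def split: if_splits)
  then show ?thesis
    using assms(1,4) by (simp add: sum.remove)
qed

lemma abs_sum_disjoint_support_le:
  fixes h :: "'j \<Rightarrow> real"
  assumes "finite I" "\<And>J. J \<in> I \<Longrightarrow> 0 \<le> h J \<and> h J \<le> 1"
    and "\<And>J K. J \<in> I \<Longrightarrow> K \<in> I \<Longrightarrow> J \<noteq> K \<Longrightarrow> min (h J) (h K) = 0"
    and "\<And>J. J \<in> I \<Longrightarrow> \<bar>c J\<bar> \<le> M" "0 \<le> M"
  shows "\<bar>\<Sum>J\<in>I. c J * h J\<bar> \<le> M"
proof (cases "\<exists>J0\<in>I. 0 < h J0")
  case True
  then obtain J0 where "J0 \<in> I" "0 < h J0"
    by blast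
  moreover have "\<bar>c J0 * h J0\<bar> \<le> M * 1"
    unfolding abs_mult using assms(2,4,5) \<open>J0 \<in> I\<close> by (intro mult_mono) auto
  ultimately show ?thesis
    using assms(1-3) sum_disjoint_support_eq[of I h J0 c] by simp
next
  case False
  then have "\<forall>J\<in>I. h J = 0"
    using assms(2) by force
  then show ?thesis
    using assms(5) by simp
qed

lemma floor_cell_inner:
  fixes v \<theta> \<delta> \<eta> M :: real
  assumes "0 < \<delta>" "0 \<le> \<theta>" "\<theta> < \<delta>" "\<bar>v\<bar> \<le> M"
    and "\<And>j::int. \<eta> \<le> \<bar>v - (\<theta> + of_int j * \<delta>)\<bar>"
  defines "j0 \<equiv> \<lfloor>(v - \<theta>) / \<delta>\<rfloor>"
  shows "\<theta> + of_int j0 * \<delta> + \<eta> \<le> v \<and> v \<le> \<theta> + of_int j0 * \<delta> + \<delta> - \<eta>"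
    and "j0 \<in> {-(\<lceil>M / \<delta>\<rceil> + 1)..\<lceil>M / \<delta>\<rceil> + 1}"
proof -
  have floor: "of_int j0 \<le> (v - \<theta>) / \<delta>" "(v - \<theta>) / \<delta> < of_int j0 + 1"
    unfolding j0_def by linarith+
  then have j0: "of_int j0 * \<delta> \<le> v - \<theta>" "v - \<theta> < (of_int j0 + 1) * \<delta>"
    using assms(1) by (simp_all add: le_divide_eq divide_less_eq)
  show "\<theta> + of_int j0 * \<delta> + \<eta> \<le> v \<and> v \<le> \<theta> + of_int j0 * \<delta> + \<delta> - \<eta>"
    using j0 assms(5)[of j0] assms(5)[of "j0 + 1"] by (auto simp: algebra_simps abs_if split: if_splits)
  have "v - \<theta> \<le> M" "- M - \<delta> \<le> v - \<theta>"
    using assms(2-4) by (auto simp: abs_le_iff)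
  then have "(v - \<theta>) / \<delta> \<le> M / \<delta>" "(- M - \<delta>) / \<delta> \<le> (v - \<theta>) / \<delta>"
    using assms(1) by (simp_all add: divide_right_mono)
  moreover have "(- M - \<delta>) / \<delta> = - (M / \<delta>) - 1"
    using assms(1) by (simp add: field_simps)
  ultimately have q: "(v - \<theta>) / \<delta> \<le> M / \<delta>" "- (M / \<delta>) - 1 \<le> (v - \<theta>) / \<delta>"
    by simp_all
  have "M / \<delta> \<le> of_int \<lceil>M / \<delta>\<rceil>"
    by simp
  then have "real_of_int j0 \<le> of_int \<lceil>M / \<delta>\<rceil>" "real_of_int (- (\<lceil>M / \<delta>\<rceil> + 1)) \<le> (v - \<theta>) / \<delta>"
    using q floor(1) by simp_all linarith+
  then show "j0 \<in> {-(\<lceil>M / \<delta>\<rceil> + 1)..\<lceil>M / \<delta>\<rceil> + 1}"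
    unfolding atLeastAtMost_iff of_int_le_iff j0_def le_floor_iff by linarith
qed

text \<open>Among the shifted grids \<open>r * \<delta> / N + \<delta> * \<int>\<close>, \<open>r < N\<close>, whose points are \<open>\<delta> / N\<close> apart,
  a real number is \<open>\<eta>\<close>-close to at most one.\<close>
lemma near_grid_shift_unique:
  fixes v \<delta> \<eta> :: real and N :: nat
  assumes "0 < \<delta>" "\<eta> * (2 * real N + 2) \<le> \<delta>" "r1 < N" "r2 < N"
    and "\<bar>v - (real r1 * \<delta> / real N + of_int j1 * \<delta>)\<bar> < \<eta>"
    and "\<bar>v - (real r2 * \<delta> / real N + of_int j2 * \<delta>)\<bar> < \<eta>"
  shows "r1 = r2"
proof -
  define z where "z = int r1 - int r2 + (j1 - j2) * int N"
  define A where "A = real r1 * \<delta> / real N + of_int j1 * \<delta>"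
  define B where "B = real r2 * \<delta> / real N + of_int j2 * \<delta>"
  have N: "0 < real N"
    using assms(3) by simp
  have "\<bar>A - B\<bar> < 2 * \<eta>"
    using assms(5,6) unfolding A_def[symmetric] B_def[symmetric] by linarith
  moreover have "A - B = \<delta> * real_of_int z / real N"
    using N by (simp add: A_def B_def z_def field_simps)
  ultimately have "\<delta> * \<bar>real_of_int z\<bar> < 2 * \<eta> * real N"
    using assms(1) N by (simp add: abs_mult field_simps)
  also have "2 * \<eta> * real N \<le> \<delta>"
  proof (cases "\<eta> \<le> 0")
    case True
    then show ?thesis
      using assms(1) N by (smt (verit) mult_nonpos_nonneg)
  next
    case False
    have "\<eta> * (2 * real N + 2) = 2 * \<eta> * real N + 2 * \<eta>"
      by (simp add: algebra_simps)
    then show ?thesis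
      using assms(2) False by linarith
  qed
  finally have "\<bar>real_of_int z\<bar> < 1"
    using assms(1) by simp
  then have "z = 0"
    by linarith
  then have "int r1 - int r2 = (j2 - j1) * int N"
    by (simp add: z_def algebra_simps)
  moreover have "\<bar>int r1 - int r2\<bar> < int N"
    using assms(3,4) by linarith
  ultimately have "\<bar>j2 - j1\<bar> * int N < 1 * int N"
    by (simp add: abs_mult)
  then have "\<bar>j2 - j1\<bar> < 1"
    by (rule mult_right_less_imp_less) simp
  then have "j1 = j2"
    by linarith
  with \<open>int r1 - int r2 = (j2 - j1) * int N\<close> show ?thesis
    by simp
qed

lemma card_near_grid_shifts_le:
  fixes v :: "nat \<Rightarrow> real" and N :: nat
  assumes "0 < \<delta>" "\<eta> * (2 * real N + 2) \<le> \<delta>"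
  shows "card {r \<in> {..<N}. \<exists>i<n. \<exists>j::int. \<bar>v i - (real r * \<delta> / real N + of_int j * \<delta>)\<bar> < \<eta>} \<le> n"
proof -
  define B where "B i = {r \<in> {..<N}. \<exists>j::int. \<bar>v i - (real r * \<delta> / real N + of_int j * \<delta>)\<bar> < \<eta>}" for i
  have "card (B i) \<le> 1" for i
  proof -
    have "\<forall>r1\<in>B i. \<forall>r2\<in>B i. r1 = r2"
      unfolding B_def using near_grid_shift_unique[OF assms] by blast
    then show ?thesis
      by (simp add: card_le_Suc0_iff_eq B_def)
  qed
  moreover have "{r \<in> {..<N}. \<exists>i<n. \<exists>j::int. \<bar>v i - (real r * \<delta> / real N + of_int j * \<delta>)\<bar> < \<eta>}
      = (\<Union>i<n. B i)"
    by (auto simp: B_def)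
  ultimately show ?thesis
    using card_UN_le[of "{..<n}" B] sum_mono[of "{..<n}" "\<lambda>i. card (B i)" "\<lambda>_. 1"] by simp
qed

lemma sum_shift_errors_le:
  fixes err :: "nat \<Rightarrow> real"
  assumes "\<And>r. r < N \<Longrightarrow> err r \<le> (if good r then a else b)" "0 \<le> a" "0 \<le> b"
    and "card {r \<in> {..<N}. \<not> good r} \<le> n"
  shows "(\<Sum>r<N. err r) \<le> real N * a + real n * b"
proof -
  have "(\<Sum>r<N. err r) \<le> (\<Sum>r<N. a + (if good r then 0 else b))"
    using assms(1,2) by (intro sum_mono) (fastforce split: if_splits)
  also have "\<dots> = real N * a + real (card {r \<in> {..<N}. \<not> good r}) * b"
    by (simp add: sum.distrib sum.If_cases Int_def)
  also have "\<dots> \<le> real N * a + real n * b"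
    using assms(3,4) by (intro add_left_mono mult_right_mono) auto
  finally show ?thesis .
qed

section \<open>Cell functions\<close>

definition trapezoid :: "real \<Rightarrow> real \<Rightarrow> real \<Rightarrow> real \<Rightarrow> real" where
  "trapezoid \<delta> \<eta> a v = max 0 (min 1 (min ((v - a) / \<eta>) ((a + \<delta> - v) / \<eta>)))"

lemma trapezoid_range: "0 \<le> trapezoid \<delta> \<eta> a v" "trapezoid \<delta> \<eta> a v \<le> 1"
  by (auto simp: trapezoid_def)

lemma trapezoid_pos_imp: "0 < \<eta> \<Longrightarrow> 0 < trapezoid \<delta> \<eta> a v \<Longrightarrow> a < v \<and> v < a + \<delta>"
  by (auto simp: trapezoid_def less_max_iff_disj zero_less_divide_iff)

lemma trapezoid_eq_1: "0 < \<eta> \<Longrightarrow> a + \<eta> \<le> v \<Longrightarrow> v \<le> a + \<delta> - \<eta> \<Longrightarrow> trapezoid \<delta> \<eta> a v = 1"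
  by (auto simp: trapezoid_def min_def max_def le_divide_eq field_simps)

text \<open>The cell function of the index vector \<open>J\<close> is a continuous approximation of the indicator
  of the set of points \<open>s\<close> with \<open>\<theta> + J!i * \<delta> < (ys!i) s < \<theta> + (J!i + 1) * \<delta>\<close> for all \<open>i\<close>;
  it equals 1 where these inequalities hold with margin \<open>\<eta>\<close>.\<close>
fun cell_fun :: "'a topology \<Rightarrow> real \<Rightarrow> real \<Rightarrow> real \<Rightarrow> int list \<Rightarrow> ('a \<Rightarrow> real) list \<Rightarrow> 'a \<Rightarrow> real"
  where
    "cell_fun X \<delta> \<eta> \<theta> [] [] = const_on X 1"
  | "cell_fun X \<delta> \<eta> \<theta> (j # J) (y # ys) =
      (\<lambda>s. min (if s \<in> topspace X then trapezoid \<delta> \<eta> (\<theta> + of_int j * \<delta>) (y s) else 0)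
               (cell_fun X \<delta> \<eta> \<theta> J ys s))"
  | "cell_fun X \<delta> \<eta> \<theta> _ _ = (\<lambda>s. 0)"

lemma cell_fun_range: "0 \<le> cell_fun X \<delta> \<eta> \<theta> J ys s \<and> cell_fun X \<delta> \<eta> \<theta> J ys s \<le> 1"
  by (induction X \<delta> \<eta> \<theta> J ys rule: cell_fun.induct) (auto simp: const_on_def trapezoid_range min_le_iff_disj)

lemma cell_fun_outside: "s \<notin> topspace X \<Longrightarrow> cell_fun X \<delta> \<eta> \<theta> J ys s = 0"
  by (induction X \<delta> \<eta> \<theta> J ys rule: cell_fun.induct) (auto simp: const_on_def)

lemma cell_fun_pos_imp:
  assumes "0 < \<eta>" "0 < cell_fun X \<delta> \<eta> \<theta> J ys s"
  shows "s \<in> topspace X \<and> length J = length ys \<and>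
    (\<forall>i<length ys. \<theta> + of_int (J!i) * \<delta> < (ys!i) s \<and> (ys!i) s < \<theta> + of_int (J!i) * \<delta> + \<delta>)"
  using assms(2)
proof (induction J ys rule: list_induct2')
  case (4 j J y ys)
  then have pos: "s \<in> topspace X" "0 < trapezoid \<delta> \<eta> (\<theta> + of_int j * \<delta>) (y s)"
      "0 < cell_fun X \<delta> \<eta> \<theta> J ys s"
    by (auto split: if_splits)
  then show ?case
    using "4.IH" trapezoid_pos_imp[OF assms(1) pos(2)] by (simp add: All_less_Suc2)
qed (auto simp: const_on_def split: if_splits)

lemma cell_fun_eq_1:
  assumes "0 < \<eta>" "s \<in> topspace X" "length J = length ys"
    and "\<And>i. i < length ys \<Longrightarrow>
      \<theta> + of_int (J!i) * \<delta> + \<eta> \<le> (ys!i) s \<and> (ys!i) s \<le> \<theta> + of_int (J!i) * \<delta> + \<delta> - \<eta>"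
  shows "cell_fun X \<delta> \<eta> \<theta> J ys s = 1"
  using assms(3,4)
proof (induction J ys rule: list_induct2')
  case (4 j J y ys)
  have "trapezoid \<delta> \<eta> (\<theta> + of_int j * \<delta>) (y s) = 1"
    using 4(3)[of 0] by (intro trapezoid_eq_1 assms(1)) auto
  moreover have "cell_fun X \<delta> \<eta> \<theta> J ys s = 1"
  proof (rule "4.IH")
    show "length J = length ys"
      using 4(2) by simp
    fix i assume "i < length ys"
    then show "\<theta> + of_int (J!i) * \<delta> + \<eta> \<le> (ys!i) s \<and> (ys!i) s \<le> \<theta> + of_int (J!i) * \<delta> + \<delta> - \<eta>"
      using 4(3)[of "Suc i"] by simp
  qed
  ultimately show ?case
    using assms(2) by simp
qed (use assms(2) in \<open>auto simp: const_on_def\<close>)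

lemma cell_fun_disjoint:
  assumes "0 < \<delta>" "0 < \<eta>" "J \<noteq> J'"
  shows "min (cell_fun X \<delta> \<eta> \<theta> J ys s) (cell_fun X \<delta> \<eta> \<theta> J' ys s) = 0"
proof (rule ccontr)
  assume "min (cell_fun X \<delta> \<eta> \<theta> J ys s) (cell_fun X \<delta> \<eta> \<theta> J' ys s) \<noteq> 0"
  then have "0 < cell_fun X \<delta> \<eta> \<theta> J ys s" "0 < cell_fun X \<delta> \<eta> \<theta> J' ys s"
    using cell_fun_range[of X \<delta> \<eta> \<theta> J ys s] cell_fun_range[of X \<delta> \<eta> \<theta> J' ys s]
    by (auto simp: min_def split: if_splits)
  note cells = cell_fun_pos_imp[OF assms(2) this(1)] cell_fun_pos_imp[OF assms(2) this(2)]
  have "J ! i = J' ! i" if "i < length ys" for i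
  proof -
    have "\<theta> + of_int (J!i) * \<delta> < (ys!i) s" "(ys!i) s < \<theta> + of_int (J!i) * \<delta> + \<delta>"
      "\<theta> + of_int (J'!i) * \<delta> < (ys!i) s" "(ys!i) s < \<theta> + of_int (J'!i) * \<delta> + \<delta>"
      using cells that by auto
    then have "of_int (J!i) * \<delta> < (of_int (J'!i) + 1) * \<delta>" "of_int (J'!i) * \<delta> < (of_int (J!i) + 1) * \<delta>"
      by (simp_all add: algebra_simps)
    then have "real_of_int (J!i) < of_int (J'!i) + 1" "real_of_int (J'!i) < of_int (J!i) + 1"
      using assms(1) by (auto simp: mult_less_cancel_right)
    then show ?thesis
      by linarith
  qed
  then have "J = J'"
    using cells by (intro nth_equalityI) auto
  with assms(3) show False
    by simp
qed

lemma cell_step_error_inner: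
  fixes ys :: "('a \<Rightarrow> real) list"
  assumes "0 < \<delta>" "0 < \<eta>" "finite I" "J0 \<in> I" "s \<in> topspace X" "length J0 = length ys"
    and "\<And>i. i < length ys \<Longrightarrow>
      \<theta> + of_int (J0!i) * \<delta> + \<eta> \<le> (ys!i) s \<and> (ys!i) s \<le> \<theta> + of_int (J0!i) * \<delta> + \<delta> - \<eta>"
    and "\<And>J. (\<exists>s'. 0 < cell_fun X \<delta> \<eta> \<theta> J ys s') \<Longrightarrow> 0 < cell_fun X \<delta> \<eta> \<theta> J ys (p J)"
    and "y \<in> set ys"
  shows "\<bar>y s - (\<Sum>J\<in>I. y (p J) * cell_fun X \<delta> \<eta> \<theta> J ys s)\<bar> \<le> \<delta>"
proof -
  have one: "cell_fun X \<delta> \<eta> \<theta> J0 ys s = 1"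
    using assms(2,5-7) by (rule cell_fun_eq_1)
  then have "0 < cell_fun X \<delta> \<eta> \<theta> J0 ys (p J0)"
    by (intro assms(8) exI[of _ s]) simp
  note p_cell = cell_fun_pos_imp[OF assms(2) this]
  have "(\<Sum>J\<in>I. y (p J) * cell_fun X \<delta> \<eta> \<theta> J ys s) = y (p J0) * cell_fun X \<delta> \<eta> \<theta> J0 ys s"
    using assms(3,4) one
    by (intro sum_disjoint_support_eq) (auto simp: cell_fun_range cell_fun_disjoint[OF assms(1,2)])
  moreover obtain i where "i < length ys" "y = ys!i"
    using assms(9) by (auto simp: in_set_conv_nth)
  ultimately show ?thesis
    using p_cell assms(7)[of i] assms(2) one by (auto simp: abs_if)
qed

lemma cell_step_error_sum_le:
  fixes ys :: "('a \<Rightarrow> real) list"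
  assumes "0 < \<delta>" "0 < \<eta>" "0 \<le> \<theta>" "\<theta> < \<delta>" "s \<in> topspace X" "0 \<le> M"
    and "\<And>y s. y \<in> set ys \<Longrightarrow> \<bar>y s\<bar> \<le> M"
    and "\<And>J. (\<exists>s'. 0 < cell_fun X \<delta> \<eta> \<theta> J ys s') \<Longrightarrow> 0 < cell_fun X \<delta> \<eta> \<theta> J ys (p J)"
  defines "I \<equiv> {J. set J \<subseteq> {-(\<lceil>M / \<delta>\<rceil> + 1)..\<lceil>M / \<delta>\<rceil> + 1} \<and> length J = length ys}"
  shows "(\<Sum>y\<in>set ys. \<bar>y s - (\<Sum>J\<in>I. y (p J) * cell_fun X \<delta> \<eta> \<theta> J ys s)\<bar>)
    \<le> (if \<forall>i<length ys. \<forall>j::int. \<eta> \<le> \<bar>(ys!i) s - (\<theta> + of_int j * \<delta>)\<bar>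
        then real (length ys) * \<delta> else real (length ys) * (2 * M))"
proof -
  have "finite I"
    unfolding I_def by (intro finite_lists_length_eq) simp
  have card: "real (card (set ys)) \<le> real (length ys)"
    by (simp add: card_length)
  show ?thesis
  proof (cases "\<forall>i<length ys. \<forall>j::int. \<eta> \<le> \<bar>(ys!i) s - (\<theta> + of_int j * \<delta>)\<bar>")
    case True
    define J0 where "J0 = map (\<lambda>y. \<lfloor>(y s - \<theta>) / \<delta>\<rfloor>) ys"
    note floor = floor_cell_inner[OF assms(1,3,4) assms(7)[OF nth_mem] True[rule_format]]
    have "J0 \<in> I"
      using floor(2) by (auto simp: I_def J0_def in_set_conv_nth)
    then have "\<bar>y s - (\<Sum>J\<in>I. y (p J) * cell_fun X \<delta> \<eta> \<theta> J ys s)\<bar> \<le> \<delta>" if "y \<in> set ys" for y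
      using floor(1) that
      by (intro cell_step_error_inner[OF assms(1,2) \<open>finite I\<close> _ assms(5) _ _ assms(8)])
        (auto simp: J0_def)
    then have "(\<Sum>y\<in>set ys. \<bar>y s - (\<Sum>J\<in>I. y (p J) * cell_fun X \<delta> \<eta> \<theta> J ys s)\<bar>)
        \<le> real (card (set ys)) * \<delta>"
      by (intro sum_bounded_above) auto
    also have "\<dots> \<le> real (length ys) * \<delta>"
      using card assms(1) by (intro mult_right_mono) auto
    finally show ?thesis
      using True by simp
  next
    case False
    have "\<bar>y s - (\<Sum>J\<in>I. y (p J) * cell_fun X \<delta> \<eta> \<theta> J ys s)\<bar> \<le> 2 * M" if "y \<in> set ys" for y
    proof -
      have "\<bar>\<Sum>J\<in>I. y (p J) * cell_fun X \<delta> \<eta> \<theta> J ys s\<bar> \<le> M"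
        using \<open>finite I\<close> cell_fun_disjoint[OF assms(1,2)] assms(6,7) that
        by (intro abs_sum_disjoint_support_le) (auto simp: cell_fun_range)
      then show ?thesis
        using assms(7)[OF that, of s] abs_triangle_ineq4[of "y s"] by linarith
    qed
    then have "(\<Sum>y\<in>set ys. \<bar>y s - (\<Sum>J\<in>I. y (p J) * cell_fun X \<delta> \<eta> \<theta> J ys s)\<bar>)
        \<le> real (card (set ys)) * (2 * M)"
      by (intro sum_bounded_above) auto
    also have "\<dots> \<le> real (length ys) * (2 * M)"
      using card assms(6) by (intro mult_right_mono) auto
    finally show ?thesis
      unfolding if_not_P[OF False] .
  qed
qed

section \<open>Unital Riesz subspaces of C(X)\<close>

locale unital_riesz_subspace_C =
  fixes X :: "'a topology" and E :: "('a \<Rightarrow> real) set"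
  assumes riesz_subspace: "riesz_subspace_C X E"
    and const_on_in: "const_on X c \<in> E"
begin

lemma zero_in: "(\<lambda>s. 0) \<in> E"
  and add_in: "f \<in> E \<Longrightarrow> g \<in> E \<Longrightarrow> (\<lambda>s. f s + g s) \<in> E"
  and scale_in: "f \<in> E \<Longrightarrow> (\<lambda>s. c * f s) \<in> E"
  and max_in: "f \<in> E \<Longrightarrow> g \<in> E \<Longrightarrow> (\<lambda>s. max (f s) (g s)) \<in> E"
  and continuous_map_in: "f \<in> E \<Longrightarrow> continuous_map X euclideanreal f"
  and vanishes_outside: "f \<in> E \<Longrightarrow> s \<notin> topspace X \<Longrightarrow> f s = 0"
  using riesz_subspace by (auto simp: riesz_subspace_C_def Cfun_def)

lemma diff_in: "f \<in> E \<Longrightarrow> g \<in> E \<Longrightarrow> (\<lambda>s. f s - g s) \<in> E"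
  using add_in[of f "\<lambda>s. -1 * g s"] scale_in[of g "-1"] by simp

lemma min_in:
  assumes "f \<in> E" "g \<in> E"
  shows "(\<lambda>s. min (f s) (g s)) \<in> E"
proof -
  have "(\<lambda>s. f s + g s - max (f s) (g s)) \<in> E"
    using assms by (intro diff_in add_in max_in)
  moreover have "(\<lambda>s. f s + g s - max (f s) (g s)) = (\<lambda>s. min (f s) (g s))"
    by (auto simp: fun_eq_iff min_def max_def)
  ultimately show ?thesis
    by simp
qed

lemma abs_in:
  assumes "f \<in> E"
  shows "(\<lambda>s. \<bar>f s\<bar>) \<in> E"
proof -
  have "(\<lambda>s. max (f s) (-1 * f s)) \<in> E"
    using assms by (intro max_in scale_in)
  moreover have "(\<lambda>s. max (f s) (-1 * f s)) = (\<lambda>s. \<bar>f s\<bar>)"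
    by (auto simp: fun_eq_iff)
  ultimately show ?thesis
    by simp
qed

lemma sum_in: "(\<And>i. i \<in> I \<Longrightarrow> f i \<in> E) \<Longrightarrow> (\<lambda>s. \<Sum>i\<in>I. f i s) \<in> E"
  by (induction I rule: infinite_finite_induct) (auto intro: zero_in add_in)

lemma term_eval_pointwise_in:
  "(\<And>x y. (x, y) \<in> term_gens t \<Longrightarrow> a x y \<in> E) \<Longrightarrow> (\<lambda>s. term_eval (\<lambda>x y. a x y s) t) \<in> E"
  by (induction t) (auto simp: sup_max intro: add_in scale_in max_in)

lemma bounded_on_finite:
  assumes "compact_space X" "finite S" "S \<subseteq> E"
  obtains M where "0 \<le> M" "\<forall>f\<in>S. \<forall>s. \<bar>f s\<bar> \<le> M"
proof -
  have "\<exists>B. \<forall>s. \<bar>f s\<bar> \<le> B" if "f \<in> S" for f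
  proof -
    have "compactin euclideanreal (f ` topspace X)"
      using assms that continuous_map_in by (metis compact_space_def image_compactin subsetD)
    then have "bounded (f ` topspace X)"
      by (simp add: compact_imp_bounded)
    then obtain B where "\<forall>v\<in>f ` topspace X. \<bar>v\<bar> \<le> B"
      unfolding bounded_iff real_norm_def by blast
    then have "\<bar>f s\<bar> \<le> max B 0" for s
      using vanishes_outside[of f s] that assms(3) by (cases "s \<in> topspace X") auto
    then show ?thesis
      by blast
  qed
  then obtain B where B: "\<And>f s. f \<in> S \<Longrightarrow> \<bar>f s\<bar> \<le> B f"
    by metis
  show ?thesis
  proof (rule that)
    show "0 \<le> Max (insert 0 (B ` S))"
      using assms(2) by (intro Max_ge) auto
    have "B f \<le> Max (insert 0 (B ` S))" if "f \<in> S" for f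
      using assms(2) that by (intro Max_ge) auto
    then show "\<forall>f\<in>S. \<forall>s. \<bar>f s\<bar> \<le> Max (insert 0 (B ` S))"
      using B order_trans by blast
  qed
qed

lemma bump_exists:
  assumes "finite S" "S \<subseteq> E" "s0 \<in> topspace X" "0 < \<rho>"
  obtains p where "p \<in> E" "p s0 = \<rho>" "\<forall>s. 0 \<le> p s \<and> p s \<le> \<rho>"
    "\<forall>s. 0 < p s \<longrightarrow> s \<in> topspace X \<and> (\<forall>x\<in>S. \<bar>x s - x s0\<bar> < \<rho>)"
proof
  define p where "p s = max 0 (const_on X \<rho> s - (\<Sum>x\<in>S. \<bar>x s - const_on X (x s0) s\<bar>))" for s
  show "p \<in> E"
    unfolding p_def using assms(2)
    by (intro max_in zero_in diff_in const_on_in sum_in abs_in) auto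
  show "p s0 = \<rho>"
    using assms(3,4) by (simp add: p_def const_on_def)
  show "\<forall>s. 0 \<le> p s \<and> p s \<le> \<rho>"
  proof
    fix s
    have "0 \<le> (\<Sum>x\<in>S. \<bar>x s - const_on X (x s0) s\<bar>)"
      by (rule sum_nonneg) simp
    moreover have "const_on X \<rho> s \<le> \<rho>"
      using assms(4) by (simp add: const_on_def)
    ultimately show "0 \<le> p s \<and> p s \<le> \<rho>"
      unfolding p_def using assms(4) by (smt (verit))
  qed
  show "\<forall>s. 0 < p s \<longrightarrow> s \<in> topspace X \<and> (\<forall>x\<in>S. \<bar>x s - x s0\<bar> < \<rho>)"
  proof (intro allI impI conjI ballI)
    fix s assume "0 < p s"
    then show "s \<in> topspace X"
      by (auto simp: p_def const_on_def split: if_splits)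
  next
    fix s x assume "0 < p s" "x \<in> S"
    then have "(\<Sum>x\<in>S. \<bar>x s - x s0\<bar>) < \<rho>"
      by (auto simp: p_def const_on_def split: if_splits)
    moreover have "\<bar>x s - x s0\<bar> \<le> (\<Sum>x\<in>S. \<bar>x s - x s0\<bar>)"
      using assms(1) \<open>x \<in> S\<close> by (intro member_le_sum) auto
    ultimately show "\<bar>x s - x s0\<bar> < \<rho>"
      by linarith
  qed
qed

lemma trapezoid_comp_in:
  assumes "y \<in> E"
  shows "(\<lambda>s. if s \<in> topspace X then trapezoid \<delta> \<eta> a (y s) else 0) \<in> E"
proof -
  let ?f = "\<lambda>s. max 0 (min (const_on X 1 s) (min ((1 / \<eta>) * (y s - const_on X a s))
                ((1 / \<eta>) * (const_on X (a + \<delta>) s - y s))))"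
  have "?f \<in> E"
    using assms by (intro max_in zero_in min_in scale_in diff_in const_on_in)
  moreover have "?f = (\<lambda>s. if s \<in> topspace X then trapezoid \<delta> \<eta> a (y s) else 0)"
    using vanishes_outside[OF assms]
    by (auto simp: fun_eq_iff trapezoid_def const_on_def divide_inverse mult.commute)
  ultimately show ?thesis
    by simp
qed

lemma cell_fun_in: "set ys \<subseteq> E \<Longrightarrow> cell_fun X \<delta> \<eta> \<theta> J ys \<in> E"
  by (induction J ys rule: list_induct2') (auto intro: const_on_in zero_in min_in trapezoid_comp_in)

text \<open>Step-function approximation of finitely many functions of \<open>E\<close>, averaged over \<open>N\<close> shifted
  grids of mesh \<open>1 / N\<close>: at each point the total error over all shifts stays bounded
  independently of \<open>N\<close>, because a point is near the grid of at most \<open>length ys\<close> of the shifts.\<close>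
lemma step_approximation:
  assumes "set ys \<subseteq> E" "\<forall>y\<in>set ys. \<forall>s. \<bar>y s\<bar> \<le> M" "0 \<le> M" "0 < N"
  obtains I :: "int list set" and h :: "nat \<Rightarrow> int list \<Rightarrow> 'a \<Rightarrow> real" and p :: "nat \<Rightarrow> int list \<Rightarrow> 'a"
  where "finite I" "\<And>r J. h r J \<in> E" "\<And>r J s. 0 \<le> h r J s"
    and "\<And>r J K s. J \<noteq> K \<Longrightarrow> min (h r J s) (h r K s) = 0"
    and "\<And>s. (\<Sum>r<N. \<Sum>y\<in>set ys. \<bar>y s - (\<Sum>J\<in>I. y (p r J) * h r J s)\<bar>)
      \<le> real (length ys) + 2 * real (length ys) ^ 2 * M"
proof -
  define n where "n = length ys"
  define \<delta> :: real where "\<delta> = 1 / real N"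
  define \<eta> where "\<eta> = \<delta> / (2 * real N + 2)"
  define \<theta> where "\<theta> r = real r * \<delta> / real N" for r
  define I where "I = {J. set J \<subseteq> {-(\<lceil>M / \<delta>\<rceil> + 1)..\<lceil>M / \<delta>\<rceil> + 1} \<and> length J = n}"
  define h where "h r J = cell_fun X \<delta> \<eta> (\<theta> r) J ys" for r J
  define p where "p r J = (SOME s. 0 < h r J s)" for r J
  have \<delta>: "0 < \<delta>" and \<eta>: "0 < \<eta>" "\<eta> * (2 * real N + 2) \<le> \<delta>"
    using assms(4) by (simp_all add: \<delta>_def \<eta>_def add_pos_nonneg)
  have \<theta>: "0 \<le> \<theta> r" "\<theta> r < \<delta>" if "r < N" for r
    using that \<delta> by (simp_all add: \<theta>_def divide_less_eq)
  have p: "0 < h r J (p r J)" if "\<exists>s. 0 < h r J s" for r J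
    unfolding p_def using that by (rule someI_ex)
  have "(\<Sum>r<N. \<Sum>y\<in>set ys. \<bar>y s - (\<Sum>J\<in>I. y (p r J) * h r J s)\<bar>) \<le> real n + 2 * real n ^ 2 * M" for s
  proof (cases "s \<in> topspace X")
    case True
    define good where "good r \<longleftrightarrow> (\<forall>i<n. \<forall>j::int. \<eta> \<le> \<bar>(ys!i) s - (\<theta> r + of_int j * \<delta>)\<bar>)" for r
    have "(\<Sum>r<N. \<Sum>y\<in>set ys. \<bar>y s - (\<Sum>J\<in>I. y (p r J) * h r J s)\<bar>)
        \<le> real N * (real n * \<delta>) + real n * (real n * (2 * M))"
    proof (rule sum_shift_errors_le[where good = good])
      show "(\<Sum>y\<in>set ys. \<bar>y s - (\<Sum>J\<in>I. y (p r J) * h r J s)\<bar>)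
          \<le> (if good r then real n * \<delta> else real n * (2 * M))" if "r < N" for r
        unfolding h_def I_def n_def good_def
        using \<delta> \<eta>(1) \<theta>[OF that] True assms(3) assms(2)[rule_format] p[of r, unfolded h_def]
        by (rule cell_step_error_sum_le)
      have "{r \<in> {..<N}. \<not> good r}
          = {r \<in> {..<N}. \<exists>i<n. \<exists>j::int. \<bar>(ys!i) s - (real r * \<delta> / real N + of_int j * \<delta>)\<bar> < \<eta>}"
        by (auto simp: good_def \<theta>_def not_le)
      then show "card {r \<in> {..<N}. \<not> good r} \<le> n"
        using card_near_grid_shifts_le[OF \<delta> \<eta>(2), where v = "\<lambda>i. (ys!i) s" and n = n] by simp
    qed (use \<delta> assms(3) in simp_all)
    then show ?thesis
      using assms(4) by (simp add: \<delta>_def power2_eq_square algebra_simps)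
  next
    case False
    then have "y s = 0" if "y \<in> set ys" for y
      using that assms(1) vanishes_outside by auto
    moreover have "h r J s = 0" for r J
      using False by (simp add: h_def cell_fun_outside)
    ultimately show ?thesis
      using assms(3) by (simp add: sum.neutral)
  qed
  moreover have "finite I"
    unfolding I_def by (intro finite_lists_length_eq) simp
  ultimately show ?thesis
    using assms(1) cell_fun_in cell_fun_disjoint[OF \<delta> \<eta>(1)]
    by (intro that[of I h p]) (auto simp: h_def n_def cell_fun_range)
qed

end

section \<open>Riesz bimorphisms on subspaces of C(X) and C(Y)\<close>

locale riesz_bimorphism_C =
  E: unital_riesz_subspace_C X E + F: unital_riesz_subspace_C Y F
  for X :: "'a topology" and E and Y :: "'b topology" and F +
  fixes \<phi> :: "('a \<Rightarrow> real) \<Rightarrow> ('b \<Rightarrow> real) \<Rightarrow> 'g::{ordered_real_vector,lattice}"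
  assumes bimorphism: "riesz_bimorphism E F \<phi>"
begin

lemma add_left: "x \<in> E \<Longrightarrow> x' \<in> E \<Longrightarrow> y \<in> F \<Longrightarrow> \<phi> (\<lambda>s. x s + x' s) y = \<phi> x y + \<phi> x' y"
  and scale_left: "x \<in> E \<Longrightarrow> y \<in> F \<Longrightarrow> \<phi> (\<lambda>s. c * x s) y = c *\<^sub>R \<phi> x y"
  and add_right: "x \<in> E \<Longrightarrow> y \<in> F \<Longrightarrow> y' \<in> F \<Longrightarrow> \<phi> x (\<lambda>t. y t + y' t) = \<phi> x y + \<phi> x y'"
  and scale_right: "x \<in> E \<Longrightarrow> y \<in> F \<Longrightarrow> \<phi> x (\<lambda>t. c * y t) = c *\<^sub>R \<phi> x y"
  and max_left: "x \<in> E \<Longrightarrow> x' \<in> E \<Longrightarrow> y \<in> F \<Longrightarrow> \<forall>t. 0 \<le> y t \<Longrightarrow>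
    \<phi> (\<lambda>s. max (x s) (x' s)) y = sup (\<phi> x y) (\<phi> x' y)"
  and max_right: "x \<in> E \<Longrightarrow> y \<in> F \<Longrightarrow> y' \<in> F \<Longrightarrow> \<forall>s. 0 \<le> x s \<Longrightarrow>
    \<phi> x (\<lambda>t. max (y t) (y' t)) = sup (\<phi> x y) (\<phi> x y')"
  using bimorphism by (simp_all add: riesz_bimorphism_def)

lemma zero_left: "y \<in> F \<Longrightarrow> \<phi> (\<lambda>s. 0) y = 0"
  using scale_left[OF E.zero_in, of y 0] by simp

lemma zero_right: "x \<in> E \<Longrightarrow> \<phi> x (\<lambda>t. 0) = 0"
  using scale_right[OF _ F.zero_in, of x 0] by simp

lemma diff_left: "x \<in> E \<Longrightarrow> x' \<in> E \<Longrightarrow> y \<in> F \<Longrightarrow> \<phi> (\<lambda>s. x s - x' s) y = \<phi> x y - \<phi> x' y"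
  using add_left[OF _ E.scale_in, of x x' y "-1"] scale_left[of x' y "-1"] by simp

lemma diff_right: "x \<in> E \<Longrightarrow> y \<in> F \<Longrightarrow> y' \<in> F \<Longrightarrow> \<phi> x (\<lambda>t. y t - y' t) = \<phi> x y - \<phi> x y'"
  using add_right[OF _ _ F.scale_in, of x y y' "-1"] scale_right[of x y' "-1"] by simp

lemma nonneg:
  assumes "x \<in> E" "y \<in> F" "\<forall>s. 0 \<le> x s" "\<forall>t. 0 \<le> y t"
  shows "0 \<le> \<phi> x y"
proof -
  have "\<phi> x y = \<phi> (\<lambda>s. max (x s) 0) y"
    using assms(3) by (simp add: max_absorb1)
  also have "\<dots> = sup (\<phi> x y) 0"
    using max_left[OF assms(1) E.zero_in assms(2,4)] zero_left[OF assms(2)] by simp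
  finally show ?thesis
    by (metis sup.cobounded2)
qed

lemma mono_left:
  "x \<in> E \<Longrightarrow> x' \<in> E \<Longrightarrow> y \<in> F \<Longrightarrow> \<forall>s. x s \<le> x' s \<Longrightarrow> \<forall>t. 0 \<le> y t \<Longrightarrow> \<phi> x y \<le> \<phi> x' y"
  using nonneg[OF E.diff_in, of x' x y] diff_left[of x' x y] by simp

lemma mono_right:
  "x \<in> E \<Longrightarrow> y \<in> F \<Longrightarrow> y' \<in> F \<Longrightarrow> \<forall>t. y t \<le> y' t \<Longrightarrow> \<forall>s. 0 \<le> x s \<Longrightarrow> \<phi> x y \<le> \<phi> x y'"
  using nonneg[OF _ F.diff_in, of x y' y] diff_right[of x y' y] by simp

lemma min_left:
  assumes "x \<in> E" "x' \<in> E" "y \<in> F" "\<forall>t. 0 \<le> y t"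
  shows "\<phi> (\<lambda>s. min (x s) (x' s)) y = inf (\<phi> x y) (\<phi> x' y)"
proof -
  have "(\<lambda>s. min (x s) (x' s)) = (\<lambda>s. (x s + x' s) - max (x s) (x' s))"
    by (auto simp: fun_eq_iff min_def max_def)
  then have "\<phi> (\<lambda>s. min (x s) (x' s)) y = \<phi> x y + \<phi> x' y - sup (\<phi> x y) (\<phi> x' y)"
    using assms by (simp add: diff_left E.add_in E.max_in add_left max_left)
  then show ?thesis
    using riesz.add_eq_inf_sup[of "\<phi> x y" "\<phi> x' y"] by (metis add_diff_cancel_left')
qed

lemma min_right:
  assumes "x \<in> E" "y \<in> F" "y' \<in> F" "\<forall>s. 0 \<le> x s"
  shows "\<phi> x (\<lambda>t. min (y t) (y' t)) = inf (\<phi> x y) (\<phi> x y')"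
proof -
  have "(\<lambda>t. min (y t) (y' t)) = (\<lambda>t. (y t + y' t) - max (y t) (y' t))"
    by (auto simp: fun_eq_iff min_def max_def)
  then have "\<phi> x (\<lambda>t. min (y t) (y' t)) = \<phi> x y + \<phi> x y' - sup (\<phi> x y) (\<phi> x y')"
    using assms by (simp add: diff_right F.add_in F.max_in add_right max_right)
  then show ?thesis
    using riesz.add_eq_inf_sup[of "\<phi> x y" "\<phi> x y'"] by (metis add_diff_cancel_left')
qed

lemma sum_right:
  "x \<in> E \<Longrightarrow> (\<And>j. j \<in> I \<Longrightarrow> h j \<in> F) \<Longrightarrow> \<phi> x (\<lambda>t. \<Sum>j\<in>I. c j * h j t) = (\<Sum>j\<in>I. c j *\<^sub>R \<phi> x (h j))"
proof (induction I rule: infinite_finite_induct)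
  case (insert j I)
  then show ?case
    by (simp add: add_right[OF _ F.scale_in F.sum_in] scale_right F.scale_in)
qed (simp_all add: zero_right)

lemma phi_const_on: "\<phi> (const_on X a) (const_on Y b) = (a * b) *\<^sub>R \<phi> (const_on X 1) (const_on Y 1)"
proof -
  have "const_on X a = (\<lambda>s. a * const_on X 1 s)" "const_on Y b = (\<lambda>u. b * const_on Y 1 u)"
    by (auto simp: const_on_def)
  then show ?thesis
    by (simp add: scale_left scale_right E.scale_in E.const_on_in F.const_on_in)
qed

lemma inf_eq_0_if_disjoint:
  assumes "x \<in> E" "x' \<in> E" "y \<in> F" "y' \<in> F"
    and "\<forall>s. 0 \<le> x s" "\<forall>s. 0 \<le> x' s" "\<forall>t. 0 \<le> y t" "\<forall>t. 0 \<le> y' t"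
    and "(\<forall>s. min (x s) (x' s) = 0) \<or> (\<forall>t. min (y t) (y' t) = 0)"
  shows "inf (\<phi> x y) (\<phi> x' y') = 0"
proof (rule antisym)
  let ?x = "\<lambda>s. x s + x' s" and ?y = "\<lambda>t. y t + y' t"
  have sums: "?x \<in> E" "?y \<in> F" "\<forall>s. 0 \<le> ?x s" "\<forall>t. 0 \<le> ?y t"
    using assms(1-8) by (auto intro: E.add_in F.add_in)
  consider "\<forall>s. min (x s) (x' s) = 0" | "\<forall>t. min (y t) (y' t) = 0"
    using assms(9) by blast
  then show "inf (\<phi> x y) (\<phi> x' y') \<le> 0"
  proof cases
    case 1
    have "inf (\<phi> x y) (\<phi> x' y') \<le> inf (\<phi> x ?y) (\<phi> x' ?y)"
      using assms sums by (intro inf_mono mono_right) auto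
    also have "\<dots> = 0"
      using assms sums 1 by (simp add: min_left[symmetric] zero_left)
    finally show ?thesis .
  next
    case 2
    have "inf (\<phi> x y) (\<phi> x' y') \<le> inf (\<phi> ?x y) (\<phi> ?x y')"
      using assms sums by (intro inf_mono mono_left) auto
    also have "\<dots> = 0"
      using assms sums 2 by (simp add: min_right[symmetric] zero_right)
    finally show ?thesis .
  qed
  show "0 \<le> inf (\<phi> x y) (\<phi> x' y')"
    using assms by (simp add: nonneg)
qed

text \<open>On pairwise disjoint \<open>h J\<close> the map \<open>(p J)\<^sub>J \<mapsto> \<Sum>J. \<phi> (p J) (h J)\<close> is a lattice homomorphism:
  the positive and negative parts of \<open>p J - q J\<close> give disjoint elements of the target.\<close>
lemma sup_sum_disjoint:
  assumes "finite I" "\<And>J. J \<in> I \<Longrightarrow> h J \<in> F" "\<And>J t. J \<in> I \<Longrightarrow> 0 \<le> h J t"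
    and "\<And>J K t. J \<in> I \<Longrightarrow> K \<in> I \<Longrightarrow> J \<noteq> K \<Longrightarrow> min (h J t) (h K t) = 0"
    and "\<And>J. J \<in> I \<Longrightarrow> p J \<in> E" "\<And>J. J \<in> I \<Longrightarrow> q J \<in> E"
  shows "sup (\<Sum>J\<in>I. \<phi> (p J) (h J)) (\<Sum>J\<in>I. \<phi> (q J) (h J)) = (\<Sum>J\<in>I. \<phi> (\<lambda>s. max (p J s) (q J s)) (h J))"
proof -
  define pos where "pos J = (\<lambda>s. max (p J s - q J s) 0)" for J
  define neg where "neg J = (\<lambda>s. max (q J s - p J s) 0)" for J
  have in_E: "pos J \<in> E" "neg J \<in> E" if "J \<in> I" for J
    using that assms(5,6) by (auto simp: pos_def neg_def intro!: E.max_in E.diff_in E.zero_in)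
  have pos_neg: "\<forall>s. 0 \<le> pos J s" "\<forall>s. 0 \<le> neg J s" "\<forall>s. min (pos J s) (neg J s) = 0" for J
    by (auto simp: pos_def neg_def)
  define P where "P = (\<Sum>J\<in>I. \<phi> (pos J) (h J))"
  define N where "N = (\<Sum>J\<in>I. \<phi> (neg J) (h J))"
  have "(\<Sum>J\<in>I. \<phi> (p J) (h J)) - (\<Sum>J\<in>I. \<phi> (q J) (h J)) = P - N"
  proof -
    have "\<phi> (p J) (h J) - \<phi> (q J) (h J) = \<phi> (pos J) (h J) - \<phi> (neg J) (h J)" if "J \<in> I" for J
    proof -
      have "\<phi> (p J) (h J) - \<phi> (q J) (h J) = \<phi> (\<lambda>s. p J s - q J s) (h J)"
        using that assms(2,5,6) by (simp add: diff_left)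
      also have "(\<lambda>s. p J s - q J s) = (\<lambda>s. pos J s - neg J s)"
        by (auto simp: fun_eq_iff pos_def neg_def max_def)
      also have "\<phi> \<dots> (h J) = \<phi> (pos J) (h J) - \<phi> (neg J) (h J)"
        using that assms(2) in_E by (simp add: diff_left)
      finally show ?thesis .
    qed
    then show ?thesis
      by (simp add: P_def N_def sum_subtractf[symmetric])
  qed
  moreover have "inf P N = 0"
    unfolding P_def N_def
  proof (intro inf_sum_sum_eq_0 nonneg inf_eq_0_if_disjoint)
    fix J K assume "J \<in> I" "K \<in> I"
    then show "(\<forall>s. min (pos J s) (neg K s) = 0) \<or> (\<forall>t. min (h J t) (h K t) = 0)"
      using assms(4) pos_neg(3) by (cases "J = K") auto
  qed (use assms(2,3) in_E pos_neg in auto)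
  ultimately have "sup (\<Sum>J\<in>I. \<phi> (p J) (h J)) (\<Sum>J\<in>I. \<phi> (q J) (h J))
      = sup (P - N) 0 + (\<Sum>J\<in>I. \<phi> (q J) (h J))"
    using riesz.add_sup_distrib_right[of "P - N" 0 "\<Sum>J\<in>I. \<phi> (q J) (h J)"] by (simp add: diff_eq_eq)
  also have "\<dots> = (\<Sum>J\<in>I. \<phi> (q J) (h J)) + P"
    using \<open>inf P N = 0\<close> by (simp add: sup_diff_0_eq_if_inf_eq_0 add.commute)
  also have "\<dots> = (\<Sum>J\<in>I. \<phi> (\<lambda>s. q J s + pos J s) (h J))"
    using assms(2,6) in_E by (simp add: P_def add_left sum.distrib)
  also have "\<dots> = (\<Sum>J\<in>I. \<phi> (\<lambda>s. max (p J s) (q J s)) (h J))"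
    by (intro sum.cong refl arg_cong2[where f = \<phi>]) (auto simp: fun_eq_iff pos_def max_def)
  finally show ?thesis .
qed

lemma term_eval_disjoint_sum:
  assumes "finite I" "\<And>J. J \<in> I \<Longrightarrow> h J \<in> F" "\<And>J t. J \<in> I \<Longrightarrow> 0 \<le> h J t"
    and "\<And>J K t. J \<in> I \<Longrightarrow> K \<in> I \<Longrightarrow> J \<noteq> K \<Longrightarrow> min (h J t) (h K t) = 0"
    and "\<And>J x y. J \<in> I \<Longrightarrow> (x, y) \<in> term_gens t \<Longrightarrow> a J x y \<in> E"
  shows "term_eval (\<lambda>x y. \<Sum>J\<in>I. \<phi> (a J x y) (h J)) t
    = (\<Sum>J\<in>I. \<phi> (\<lambda>s. term_eval (\<lambda>x y. a J x y s) t) (h J))"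
  using assms(5)
proof (induction t)
  case (Add p q)
  then show ?case
    using assms(2) by (simp add: add_left E.term_eval_pointwise_in sum.distrib)
next
  case (Scale c p)
  then show ?case
    using assms(2) by (simp add: scale_left E.term_eval_pointwise_in scaleR_sum_right)
next
  case (Join p q)
  have "term_eval (\<lambda>x y. \<Sum>J\<in>I. \<phi> (a J x y) (h J)) (Join p q)
      = sup (\<Sum>J\<in>I. \<phi> (\<lambda>s. term_eval (\<lambda>x y. a J x y s) p) (h J))
            (\<Sum>J\<in>I. \<phi> (\<lambda>s. term_eval (\<lambda>x y. a J x y s) q) (h J))"
    using Join by simp
  also have "\<dots> = (\<Sum>J\<in>I. \<phi> (\<lambda>s. max (term_eval (\<lambda>x y. a J x y s) p) (term_eval (\<lambda>x y. a J x y s) q)) (h J))"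
    using Join.prems by (intro sup_sum_disjoint assms(1-4) E.term_eval_pointwise_in) auto
  finally show ?case
    by (simp add: sup_max)
qed simp

text \<open>Expand \<open>0 \<le> \<phi> (m + a x) (e + b d)\<close> for \<open>a, b \<in> {-1, 1}\<close> and add the four inequalities
  in pairs to isolate \<open>\<plusminus>2 \<phi> x d\<close>.\<close>
lemma riesz_abs_le:
  assumes "x \<in> E" "d \<in> F" "m \<in> E" "e \<in> F" "\<forall>s. \<bar>x s\<bar> \<le> m s" "\<forall>t. \<bar>d t\<bar> \<le> e t"
  shows "riesz_abs (\<phi> x d) \<le> \<phi> m e"
proof -
  have expand: "\<phi> (\<lambda>s. m s + a * x s) (\<lambda>t. e t + b * d t)
      = \<phi> m e + b *\<^sub>R \<phi> m d + a *\<^sub>R \<phi> x e + (a * b) *\<^sub>R \<phi> x d" for a b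
    using assms(1-4)
    by (simp add: add_left add_right scale_left scale_right E.scale_in F.scale_in E.add_in)
  have "0 \<le> m s + a * x s" "0 \<le> e t + a * d t" if "a \<in> {-1, 1}" for a s t
    using that spec[OF assms(5), of s] spec[OF assms(6), of t] by (auto simp: abs_le_iff)
  then have pos: "0 \<le> \<phi> m e + b *\<^sub>R \<phi> m d + a *\<^sub>R \<phi> x e + (a * b) *\<^sub>R \<phi> x d"
    if "a \<in> {-1, 1}" "b \<in> {-1, 1}" for a b
    unfolding expand[symmetric] using that assms(1-4)
    by (intro nonneg E.add_in F.add_in E.scale_in F.scale_in) auto
  have "0 \<le> (\<phi> m e - \<phi> x d) + (\<phi> m e - \<phi> x d)"
    using add_nonneg_nonneg[OF pos[of "-1" 1] pos[of 1 "-1"]] by (simp add: algebra_simps)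
  moreover have "0 \<le> (\<phi> m e + \<phi> x d) + (\<phi> m e + \<phi> x d)"
    using add_nonneg_nonneg[OF pos[of 1 1] pos[of "-1" "-1"]] by (simp add: algebra_simps)
  ultimately have "\<phi> x d \<le> \<phi> m e" "0 \<le> \<phi> m e + \<phi> x d"
    by simp_all
  then show ?thesis
    using add_le_imp_le_right[of "- \<phi> x d" "\<phi> x d" "\<phi> m e"] by (simp add: riesz_abs_le_iff)
qed

lemma term_gens_bounded:
  assumes "compact_space X" "compact_space Y" "term_gens t \<subseteq> E \<times> F"
  obtains M where "0 \<le> M" "\<forall>(x, y)\<in>term_gens t. \<forall>s u. \<bar>x s\<bar> \<le> M \<and> \<bar>y u\<bar> \<le> M"
proof -
  have "fst ` term_gens t \<subseteq> E" "snd ` term_gens t \<subseteq> F"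
    using assms(3) by auto
  obtain Mx where Mx: "0 \<le> Mx" "\<forall>x\<in>fst ` term_gens t. \<forall>s. \<bar>x s\<bar> \<le> Mx"
    by (rule E.bounded_on_finite[OF assms(1) finite_imageI[OF finite_term_gens] \<open>fst ` term_gens t \<subseteq> E\<close>])
  obtain My where My: "0 \<le> My" "\<forall>y\<in>snd ` term_gens t. \<forall>u. \<bar>y u\<bar> \<le> My"
    by (rule F.bounded_on_finite[OF assms(2) finite_imageI[OF finite_term_gens] \<open>snd ` term_gens t \<subseteq> F\<close>])
  show ?thesis
  proof (rule that[of "max Mx My"])
    show "0 \<le> max Mx My"
      using Mx(1) by (simp add: le_max_iff_disj)
    have "\<bar>x s\<bar> \<le> Mx \<and> \<bar>y u\<bar> \<le> My" if "(x, y) \<in> term_gens t" for x y s u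
    proof -
      have "x \<in> fst ` term_gens t" "y \<in> snd ` term_gens t"
        using image_eqI[where f = fst, OF _ that] image_eqI[where f = snd, OF _ that] by simp_all
      then show ?thesis
        using Mx(2) My(2) by blast
    qed
    then show "\<forall>(x, y)\<in>term_gens t. \<forall>s u. \<bar>x s\<bar> \<le> max Mx My \<and> \<bar>y u\<bar> \<le> max Mx My"
      by (fastforce simp: le_max_iff_disj)
  qed
qed

lemma term_eval_step_nonneg:
  assumes "finite I" "\<And>J. J \<in> I \<Longrightarrow> h J \<in> F" "\<And>J t. J \<in> I \<Longrightarrow> 0 \<le> h J t"
    and "\<And>J K t. J \<in> I \<Longrightarrow> K \<in> I \<Longrightarrow> J \<noteq> K \<Longrightarrow> min (h J t) (h K t) = 0"
    and "term_gens t \<subseteq> E \<times> F" "\<And>s u. 0 \<le> term_eval (\<lambda>x y. x s * y u) t"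
  shows "0 \<le> term_eval (\<lambda>x y. \<phi> x (\<lambda>\<tau>. \<Sum>J\<in>I. y (p J) * h J \<tau>)) t"
proof -
  have "term_eval (\<lambda>x y. \<phi> x (\<lambda>\<tau>. \<Sum>J\<in>I. y (p J) * h J \<tau>)) t
      = term_eval (\<lambda>x y. \<Sum>J\<in>I. \<phi> (\<lambda>s. y (p J) * x s) (h J)) t"
    using assms(2,5) by (intro term_eval_cong) (auto simp: sum_right scale_left)
  also have "\<dots> = (\<Sum>J\<in>I. \<phi> (\<lambda>s. term_eval (\<lambda>x y. y (p J) * x s) t) (h J))"
    using assms(1-5) by (intro term_eval_disjoint_sum) (auto intro: E.scale_in)
  also have "0 \<le> \<dots>"
  proof (intro sum_nonneg nonneg)
    fix J assume "J \<in> I"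
    show "(\<lambda>s. term_eval (\<lambda>x y. y (p J) * x s) t) \<in> E"
      using assms(5) by (intro E.term_eval_pointwise_in E.scale_in) auto
    show "h J \<in> F" "\<forall>\<tau>. 0 \<le> h J \<tau>"
      using assms(2,3) \<open>J \<in> I\<close> by auto
    show "\<forall>s. 0 \<le> term_eval (\<lambda>x y. y (p J) * x s) t"
      using assms(6) by (simp add: mult.commute)
  qed
  finally show ?thesis .
qed

lemma term_eval_step_error_bound:
  assumes "term_gens t \<subseteq> E \<times> F" "\<And>s u. 0 \<le> term_eval (\<lambda>x y. x s * y u) t"
    and "finite I" "\<And>J. J \<in> I \<Longrightarrow> h J \<in> F" "\<And>J t. J \<in> I \<Longrightarrow> 0 \<le> h J t"
    and "\<And>J K t. J \<in> I \<Longrightarrow> K \<in> I \<Longrightarrow> J \<noteq> K \<Longrightarrow> min (h J t) (h K t) = 0"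
    and "m \<in> E" "\<And>x y s. (x, y) \<in> term_gens t \<Longrightarrow> \<bar>x s\<bar> \<le> m s"
    and "snd ` term_gens t \<subseteq> set ys" "set ys \<subseteq> F"
  shows "0 \<le> term_eval \<phi> t + term_lipschitz t *\<^sub>R \<phi> m (\<lambda>\<tau>. \<Sum>y\<in>set ys. \<bar>y \<tau> - (\<Sum>J\<in>I. y (p J) * h J \<tau>)\<bar>)"
proof -
  define step where "step y = (\<lambda>\<tau>. \<Sum>J\<in>I. y (p J) * h J \<tau>)" for y :: "'b \<Rightarrow> real"
  define err where "err = (\<lambda>\<tau>. \<Sum>y\<in>set ys. \<bar>y \<tau> - step y \<tau>\<bar>)"
  have step_in: "step y \<in> F" for y
    unfolding step_def using assms(4) by (intro F.sum_in F.scale_in)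
  have "err \<in> F"
    unfolding err_def using assms(10) step_in by (intro F.sum_in F.abs_in F.diff_in) auto
  have "riesz_abs (\<phi> x y - \<phi> x (step y)) \<le> \<phi> m err" if "(x, y) \<in> term_gens t" for x y
  proof -
    have "y \<in> set ys" "x \<in> E" "y \<in> F"
      using that assms(1,9) by force+
    then have "riesz_abs (\<phi> x (\<lambda>\<tau>. y \<tau> - step y \<tau>)) \<le> \<phi> m err"
      using assms(7,8) that \<open>err \<in> F\<close> step_in
      by (intro riesz_abs_le F.diff_in) (auto simp: err_def intro: member_le_sum)
    then show ?thesis
      using \<open>x \<in> E\<close> \<open>y \<in> F\<close> step_in by (simp add: diff_right)
  qed
  then have "riesz_abs (term_eval \<phi> t - term_eval (\<lambda>x y. \<phi> x (step y)) t) \<le> term_lipschitz t *\<^sub>R \<phi> m err"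
    by (rule term_eval_lipschitz)
  then have "- (term_eval \<phi> t - term_eval (\<lambda>x y. \<phi> x (step y)) t) \<le> term_lipschitz t *\<^sub>R \<phi> m err"
    by (rule order_trans[OF riesz_abs_ge(2)])
  then have "term_eval (\<lambda>x y. \<phi> x (step y)) t - term_lipschitz t *\<^sub>R \<phi> m err \<le> term_eval \<phi> t"
    by (simp add: algebra_simps)
  moreover have "0 \<le> term_eval (\<lambda>x y. \<phi> x (step y)) t"
    unfolding step_def using assms(3-6,1,2) by (rule term_eval_step_nonneg)
  ultimately show ?thesis
    by (simp add: err_def step_def algebra_simps)
qed

lemma term_eval_shifted_steps_bound:
  assumes "term_gens t \<subseteq> E \<times> F" "\<And>s u. 0 \<le> term_eval (\<lambda>x y. x s * y u) t"
    and "finite I" "\<And>r J. h r J \<in> F" "\<And>r J s. 0 \<le> h r J s"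
    and "\<And>r J K s. J \<noteq> K \<Longrightarrow> min (h r J s) (h r K s) = 0"
    and "m \<in> E" "\<And>x y s. (x, y) \<in> term_gens t \<Longrightarrow> \<bar>x s\<bar> \<le> m s"
    and "snd ` term_gens t \<subseteq> set ys" "set ys \<subseteq> F"
  shows "0 \<le> real N *\<^sub>R term_eval \<phi> t + term_lipschitz t *\<^sub>R
      \<phi> m (\<lambda>\<tau>. \<Sum>r<N. \<Sum>y\<in>set ys. \<bar>y \<tau> - (\<Sum>J\<in>I. y (p r J) * h r J \<tau>)\<bar>)"
proof -
  define err where "err r = (\<lambda>\<tau>. \<Sum>y\<in>set ys. \<bar>y \<tau> - (\<Sum>J\<in>I. y (p r J) * h r J \<tau>)\<bar>)" for r
  have "err r \<in> F" for r
    unfolding err_def using assms(4,10) by (intro F.sum_in F.abs_in F.diff_in F.scale_in) auto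
  have "0 \<le> (\<Sum>r<N. term_eval \<phi> t + term_lipschitz t *\<^sub>R \<phi> m (err r))"
    unfolding err_def using assms by (intro sum_nonneg term_eval_step_error_bound) auto
  also have "\<dots> = real N *\<^sub>R term_eval \<phi> t + term_lipschitz t *\<^sub>R \<phi> m (\<lambda>\<tau>. \<Sum>r<N. err r \<tau>)"
    using sum_right[of m "{..<N}" err "\<lambda>_. 1", OF assms(7) \<open>\<And>r. err r \<in> F\<close>]
    by (simp add: sum.distrib scaleR_sum_right sum_constant_scaleR)
  finally show ?thesis
    by (simp add: err_def)
qed

lemma term_eval_multiple_lower_bound:
  assumes "term_gens t \<subseteq> E \<times> F" "\<And>s u. 0 \<le> term_eval (\<lambda>x y. x s * y u) t"
    and "set ys = snd ` term_gens t" "0 \<le> M" "\<forall>(x, y)\<in>term_gens t. \<forall>s u. \<bar>x s\<bar> \<le> M \<and> \<bar>y u\<bar> \<le> M"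
    and "0 < N"
  shows "- ((term_lipschitz t * M * (real (length ys) + 2 * real (length ys) ^ 2 * M))
      *\<^sub>R \<phi> (const_on X 1) (const_on Y 1)) \<le> real N *\<^sub>R term_eval \<phi> t"
proof -
  have ys: "set ys \<subseteq> F" "\<forall>y\<in>set ys. \<forall>u. \<bar>y u\<bar> \<le> M" "snd ` term_gens t \<subseteq> set ys"
    using assms(1,3,5) by auto
  have m: "const_on X M \<in> E" "\<forall>s. 0 \<le> const_on X M s"
    using E.const_on_in assms(4) by (auto simp: const_on_def)
  have m_bound: "\<bar>x s\<bar> \<le> const_on X M s" if "(x, y) \<in> term_gens t" for x y s
    using assms(1,5) that E.vanishes_outside[of x s] by (cases "s \<in> topspace X") (auto simp: const_on_def)
  show ?thesis
  proof (rule F.step_approximation[OF ys(1,2) assms(4,6)])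
    fix I :: "int list set" and h p
    assume I: "finite I" "\<And>r J. h r J \<in> F" "\<And>r J s. 0 \<le> h r J s"
      "\<And>r J K s. J \<noteq> K \<Longrightarrow> min (h r J s) (h r K s) = 0"
      and bound: "\<And>\<tau>. (\<Sum>r<N. \<Sum>y\<in>set ys. \<bar>y \<tau> - (\<Sum>J\<in>I. y (p r J) * h r J \<tau>)\<bar>)
        \<le> real (length ys) + 2 * real (length ys) ^ 2 * M"
    define C where "C = real (length ys) + 2 * real (length ys) ^ 2 * M"
    define err where "err = (\<lambda>\<tau>. \<Sum>r<N. \<Sum>y\<in>set ys. \<bar>y \<tau> - (\<Sum>J\<in>I. y (p r J) * h r J \<tau>)\<bar>)"
    have "err \<in> F"
      unfolding err_def using ys(1) I(2) by (intro F.sum_in F.abs_in F.diff_in F.scale_in) auto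
    have "\<forall>\<tau>. err \<tau> \<le> const_on Y C \<tau>"
    proof
      fix \<tau>
      show "err \<tau> \<le> const_on Y C \<tau>"
        using bound[of \<tau>] F.vanishes_outside[OF \<open>err \<in> F\<close>, of \<tau>]
        by (cases "\<tau> \<in> topspace Y") (simp_all add: const_on_def err_def C_def)
    qed
    have "0 \<le> real N *\<^sub>R term_eval \<phi> t + term_lipschitz t *\<^sub>R \<phi> (const_on X M) err"
      unfolding err_def using assms(1,2) I m(1) m_bound ys(3,1) by (rule term_eval_shifted_steps_bound)
    also have "\<dots> \<le> real N *\<^sub>R term_eval \<phi> t + term_lipschitz t *\<^sub>R \<phi> (const_on X M) (const_on Y C)"
      using m \<open>err \<in> F\<close> \<open>\<forall>\<tau>. err \<tau> \<le> const_on Y C \<tau>\<close>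
      by (intro add_left_mono scaleR_left_mono mono_right F.const_on_in) (auto simp: term_lipschitz_nonneg)
    also have "\<dots> = real N *\<^sub>R term_eval \<phi> t + (term_lipschitz t * M * C) *\<^sub>R \<phi> (const_on X 1) (const_on Y 1)"
      by (simp add: phi_const_on[of M C] mult.assoc)
    finally have "0 \<le> real N *\<^sub>R term_eval \<phi> t
        + (term_lipschitz t * M * C) *\<^sub>R \<phi> (const_on X 1) (const_on Y 1)" .
    from add_right_mono[OF this, of "- ((term_lipschitz t * M * C) *\<^sub>R \<phi> (const_on X 1) (const_on Y 1))"]
    show ?thesis
      by (simp add: C_def)
  qed
qed

lemma term_eval_nonneg_if_pointwise_nonneg:
  assumes "compact_space X" "compact_space Y" "archimedean_riesz TYPE('g)"
    and "term_gens t \<subseteq> E \<times> F" "\<And>s u. 0 \<le> term_eval (\<lambda>x y. x s * y u) t"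
  shows "0 \<le> term_eval \<phi> t"
proof -
  obtain ys where ys: "set ys = snd ` term_gens t"
    using finite_list[OF finite_imageI[OF finite_term_gens[of t]], of snd] by (elim exE) (rule that)
  obtain M where M: "0 \<le> M" "\<forall>(x, y)\<in>term_gens t. \<forall>s u. \<bar>x s\<bar> \<le> M \<and> \<bar>y u\<bar> \<le> M"
    by (rule term_gens_bounded[OF assms(1,2,4)])
  have "0 \<le> \<phi> (const_on X 1) (const_on Y 1)"
    by (intro nonneg E.const_on_in F.const_on_in) (auto simp: const_on_def)
  then show ?thesis
  proof (rule archimedean_nonneg_if_bounded_below[OF assms(3)])
    show "0 \<le> term_lipschitz t * M * (real (length ys) + 2 * real (length ys) ^ 2 * M)"
      using M(1) by (intro mult_nonneg_nonneg add_nonneg_nonneg term_lipschitz_nonneg) simp_all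
    show "- ((term_lipschitz t * M * (real (length ys) + 2 * real (length ys) ^ 2 * M))
        *\<^sub>R \<phi> (const_on X 1) (const_on Y 1)) \<le> real N *\<^sub>R term_eval \<phi> t" if "0 < N" for N
      using assms(4,5) ys M that by (rule term_eval_multiple_lower_bound)
  qed
qed

lemma topspace_if_pointwise_term_eval_nonzero:
  assumes "term_gens t \<subseteq> E \<times> F" "term_eval (\<lambda>x y. x s * y u) t \<noteq> 0"
  shows "s \<in> topspace X" "u \<in> topspace Y"
proof -
  have "term_eval (\<lambda>x y. x s * y u) t = 0" if "s \<notin> topspace X \<or> u \<notin> topspace Y"
    using assms(1) that E.vanishes_outside F.vanishes_outside by (intro term_eval_eq_0) force
  then show "s \<in> topspace X" "u \<in> topspace Y"
    using assms(2) by blast+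
qed

lemma bumps_where_term_eval_close:
  assumes "compact_space X" "compact_space Y" "term_gens t \<subseteq> E \<times> F"
    and "s0 \<in> topspace X" "u0 \<in> topspace Y" "0 < \<epsilon>"
  obtains p q \<rho> where "0 < \<rho>" "p \<in> E" "q \<in> F" "p s0 = \<rho>" "q u0 = \<rho>"
    "\<forall>s. 0 \<le> p s \<and> p s \<le> \<rho>" "\<forall>u. 0 \<le> q u \<and> q u \<le> \<rho>"
    "\<forall>s u. 0 < p s \<and> 0 < q u \<longrightarrow>
      \<bar>term_eval (\<lambda>x y. x s * y u) t - term_eval (\<lambda>x y. x s0 * y u0) t\<bar> \<le> \<epsilon>"
proof -
  obtain M where M: "0 \<le> M" "\<forall>(x, y)\<in>term_gens t. \<forall>s u. \<bar>x s\<bar> \<le> M \<and> \<bar>y u\<bar> \<le> M"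
    by (rule term_gens_bounded[OF assms(1-3)])
  define \<rho> where "\<rho> = \<epsilon> / (2 * (term_lipschitz t * M + 1))"
  have "0 \<le> term_lipschitz t * M"
    by (rule mult_nonneg_nonneg[OF term_lipschitz_nonneg M(1)])
  then have "0 < \<rho>" "term_lipschitz t * (2 * M * \<rho>) \<le> \<epsilon>"
    using assms(6) by (simp_all add: \<rho>_def field_simps)
  have "fst ` term_gens t \<subseteq> E" "snd ` term_gens t \<subseteq> F"
    using assms(3) by auto
  obtain p where p: "p \<in> E" "p s0 = \<rho>" "\<forall>s. 0 \<le> p s \<and> p s \<le> \<rho>"
    "\<forall>s. 0 < p s \<longrightarrow> s \<in> topspace X \<and> (\<forall>x\<in>fst ` term_gens t. \<bar>x s - x s0\<bar> < \<rho>)"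
    by (rule E.bump_exists[OF finite_imageI[OF finite_term_gens] \<open>fst ` term_gens t \<subseteq> E\<close> assms(4) \<open>0 < \<rho>\<close>])
  obtain q where q: "q \<in> F" "q u0 = \<rho>" "\<forall>u. 0 \<le> q u \<and> q u \<le> \<rho>"
    "\<forall>u. 0 < q u \<longrightarrow> u \<in> topspace Y \<and> (\<forall>y\<in>snd ` term_gens t. \<bar>y u - y u0\<bar> < \<rho>)"
    by (rule F.bump_exists[OF finite_imageI[OF finite_term_gens] \<open>snd ` term_gens t \<subseteq> F\<close> assms(5) \<open>0 < \<rho>\<close>])
  have close: "\<bar>term_eval (\<lambda>x y. x s * y u) t - term_eval (\<lambda>x y. x s0 * y u0) t\<bar> \<le> \<epsilon>"
    if "0 < p s" "0 < q u" for s u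
  proof -
    have "\<bar>x s - x s0\<bar> \<le> \<rho> \<and> \<bar>y u - y u0\<bar> \<le> \<rho> \<and> \<bar>x s0\<bar> \<le> M \<and> \<bar>y u\<bar> \<le> M"
      if "(x, y) \<in> term_gens t" for x y
      using p(4)[rule_format, OF \<open>0 < p s\<close>] q(4)[rule_format, OF \<open>0 < q u\<close>] M(2) that
        image_eqI[where f = fst, OF _ that] image_eqI[where f = snd, OF _ that]
      by (fastforce intro: less_imp_le)
    then have "\<bar>term_eval (\<lambda>x y. x s * y u) t - term_eval (\<lambda>x y. x s0 * y u0) t\<bar>
        \<le> term_lipschitz t * (2 * M * \<rho>)"
      by (rule term_eval_products_close)
    then show ?thesis
      using \<open>term_lipschitz t * (2 * M * \<rho>) \<le> \<epsilon>\<close> by linarith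
  qed
  show ?thesis
    using \<open>0 < \<rho>\<close> p(1-3) q(1-3) close by (intro that[of \<rho> p q]) auto
qed

lemma pointwise_nonneg_if_term_eval_nonneg:
  assumes "compact_space X" "compact_space Y" "archimedean_riesz TYPE('g)" "bi_injective E F \<phi>"
    and "term_gens t \<subseteq> E \<times> F" "0 \<le> term_eval \<phi> t"
  shows "0 \<le> term_eval (\<lambda>x y. x s0 * y u0) t"
proof (rule ccontr)
  define e where "e s u = term_eval (\<lambda>x y. x s * y u) t" for s u
  define \<kappa> where "\<kappa> = - e s0 u0"
  assume "\<not> 0 \<le> term_eval (\<lambda>x y. x s0 * y u0) t"
  then have "0 < \<kappa>" "0 < \<kappa> / 2" "e s0 u0 = - \<kappa>" "s0 \<in> topspace X" "u0 \<in> topspace Y"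
    using topspace_if_pointwise_term_eval_nonzero[OF assms(5), of s0 u0] by (simp_all add: \<kappa>_def e_def)
  obtain p q \<rho> where pq: "0 < \<rho>" "p \<in> E" "q \<in> F" "p s0 = \<rho>" "q u0 = \<rho>"
    "\<forall>s. 0 \<le> p s \<and> p s \<le> \<rho>" "\<forall>u. 0 \<le> q u \<and> q u \<le> \<rho>"
    and close: "\<forall>s u. 0 < p s \<and> 0 < q u \<longrightarrow> \<bar>e s u - e s0 u0\<bar> \<le> \<kappa> / 2"
    unfolding e_def
    by (rule bumps_where_term_eval_close[OF assms(1,2,5) \<open>s0 \<in> topspace X\<close> \<open>u0 \<in> topspace Y\<close>
          \<open>0 < \<kappa> / 2\<close>])
  define z where "z = Add (Scale (2 * \<rho> * \<rho> / \<kappa>) (Join (Scale (-1) t) (Scale 0 t))) (Scale (-1) (Gen p q))"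
  have "term_gens z \<subseteq> E \<times> F"
    using assms(5) pq(2,3) by (simp add: z_def)
  moreover have "0 \<le> term_eval (\<lambda>x y. x s * y u) z" for s u
    using bump_product_le_negative_part[OF \<open>0 < \<kappa>\<close> \<open>e s0 u0 = - \<kappa>\<close> close pq(6,7), of s u]
    by (simp add: z_def e_def sup_max)
  ultimately have "0 \<le> term_eval \<phi> z"
    using assms(1-3) by (rule term_eval_nonneg_if_pointwise_nonneg[rotated 3])
  moreover have "term_eval \<phi> z = - \<phi> p q"
    using assms(6) by (simp add: z_def sup_absorb2)
  moreover have "0 \<le> \<phi> p q"
    using pq by (intro nonneg) auto
  ultimately have "\<phi> p q = 0"
    by simp
  then have "p = (\<lambda>s. 0) \<or> q = (\<lambda>u. 0)"
    using assms(4) pq(2,3) unfolding bi_injective_def by blast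
  then show False
    using pq(1,4,5) by (auto simp: fun_eq_iff dest: spec[of _ s0] spec[of _ u0])
qed

theorem term_eval_nonneg_iff:
  assumes "compact_space X" "compact_space Y" "archimedean_riesz TYPE('g)" "bi_injective E F \<phi>"
    and "term_gens t \<subseteq> E \<times> F"
  shows "0 \<le> term_eval \<phi> t \<longleftrightarrow> (\<forall>s u. 0 \<le> term_eval (\<lambda>x y. x s * y u) t)"
  using term_eval_nonneg_if_pointwise_nonneg[OF assms(1-3,5)]
    pointwise_nonneg_if_term_eval_nonneg[OF assms(1-5)] by blast

lemma term_eval_eq_0_iff:
  assumes "compact_space X" "compact_space Y" "archimedean_riesz TYPE('g)" "bi_injective E F \<phi>"
    and "term_gens t \<subseteq> E \<times> F"
  shows "term_eval \<phi> t = 0 \<longleftrightarrow> (\<forall>s u. term_eval (\<lambda>x y. x s * y u) t = 0)"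
proof -
  have "term_gens (Scale (-1) t) \<subseteq> E \<times> F"
    using assms(5) by simp
  then have "term_eval \<phi> t = 0 \<longleftrightarrow> 0 \<le> term_eval \<phi> t \<and> 0 \<le> term_eval \<phi> (Scale (-1) t)"
    by auto
  also have "\<dots> \<longleftrightarrow> (\<forall>s u. 0 \<le> term_eval (\<lambda>x y. x s * y u) t \<and> 0 \<le> - term_eval (\<lambda>x y. x s * y u) t)"
    using term_eval_nonneg_iff[OF assms(1-5)] term_eval_nonneg_iff[OF assms(1-4) \<open>term_gens (Scale (-1) t) \<subseteq> E \<times> F\<close>]
    by auto
  finally show ?thesis
    by (auto intro: antisym)
qed

end

theorem corollary3p5:
  fixes X :: "'a topology" and Y :: "'b topology"
    and E :: "('a \<Rightarrow> real) set" and F :: "('b \<Rightarrow> real) set"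
    and \<phi>1 :: "('a \<Rightarrow> real) \<Rightarrow> ('b \<Rightarrow> real) \<Rightarrow> 'g1::{ordered_real_vector,lattice}"
    and \<phi>2 :: "('a \<Rightarrow> real) \<Rightarrow> ('b \<Rightarrow> real) \<Rightarrow> 'g2::{ordered_real_vector,lattice}"
  assumes "compact_space X" "Hausdorff_space X"
    and "compact_space Y" "Hausdorff_space Y"
    and "riesz_subspace_C X E" "sup_dense_C X E" "\<forall>c. const_on X c \<in> E"
    and "riesz_subspace_C Y F" "sup_dense_C Y F" "\<forall>c. const_on Y c \<in> F"
    and "archimedean_riesz TYPE('g1)" "archimedean_riesz TYPE('g2)"
    and "riesz_bimorphism E F \<phi>1" "bi_injective E F \<phi>1"
    and "riesz_bimorphism E F \<phi>2" "bi_injective E F \<phi>2"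
  shows "(\<exists>T. riesz_iso_on (riesz_span ((\<lambda>(x, y). \<phi>1 x y) ` (E \<times> F)))
                          (riesz_span ((\<lambda>(x, y). \<phi>2 x y) ` (E \<times> F))) T
            \<and> (\<forall>x\<in>E. \<forall>y\<in>F. T (\<phi>1 x y) = \<phi>2 x y))
       \<and> (\<forall>T T'. riesz_iso_on (riesz_span ((\<lambda>(x, y). \<phi>1 x y) ` (E \<times> F)))
                          (riesz_span ((\<lambda>(x, y). \<phi>2 x y) ` (E \<times> F))) T
            \<and> (\<forall>x\<in>E. \<forall>y\<in>F. T (\<phi>1 x y) = \<phi>2 x y)
            \<and> riesz_iso_on (riesz_span ((\<lambda>(x, y). \<phi>1 x y) ` (E \<times> F)))
                          (riesz_span ((\<lambda>(x, y). \<phi>2 x y) ` (E \<times> F))) T'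
            \<and> (\<forall>x\<in>E. \<forall>y\<in>F. T' (\<phi>1 x y) = \<phi>2 x y)
            \<longrightarrow> (\<forall>z\<in>riesz_span ((\<lambda>(x, y). \<phi>1 x y) ` (E \<times> F)). T z = T' z))"
proof -
  let ?S1 = "riesz_span ((\<lambda>(x, y). \<phi>1 x y) ` (E \<times> F))"
  let ?S2 = "riesz_span ((\<lambda>(x, y). \<phi>2 x y) ` (E \<times> F))"
  interpret \<phi>1: riesz_bimorphism_C X E Y F \<phi>1
    using assms(5,7,8,10,13) by unfold_locales auto
  interpret \<phi>2: riesz_bimorphism_C X E Y F \<phi>2
    using assms(5,7,8,10,15) by unfold_locales auto
  have "term_eval \<phi>1 t = 0 \<longleftrightarrow> term_eval \<phi>2 t = 0" if "term_gens t \<subseteq> E \<times> F" for t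
    using \<phi>1.term_eval_eq_0_iff[OF assms(1,3,11,14) that] \<phi>2.term_eval_eq_0_iff[OF assms(1,3,12,16) that]
    by simp
  then obtain T where "riesz_iso_on ?S1 ?S2 T" "\<forall>x\<in>E. \<forall>y\<in>F. T (\<phi>1 x y) = \<phi>2 x y"
    by (rule riesz_iso_on_spans_if_same_kernel[OF \<phi>1.E.zero_in \<phi>1.F.zero_in])
  then show ?thesis
    using riesz_hom_on_span_unique[where f = \<phi>1 and A = E and B = F and g = \<phi>2]
    unfolding riesz_iso_on_def by blast
qed

end
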